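(* Let $m,M$ be positive integers. Let $\Pi_{\mathcal{A}}^M=\{p_a(\mathbf{z}_1,\dots,\mathbf{z}_M):a\in\mathcal{A}\}$ be a family of densities on $\mathbb{R}^{mM}$ and $\mathcal{P}_{\mathcal{B}}^M=\{p_b(\mathbf{z}_t\mid\mathbf{z}_{t-1},\dots,\mathbf{z}_{t-M}):b\in\mathcal{B}\}$ a family of conditional densities, and assume: (c1) $p_a>0$ on $\mathbb{R}^{mM}$ for all $a\in\mathcal{A}$, and for every positive-measure $\mathcal{Y}\subset\mathbb{R}^{mM}$, $\Pi_{\mathcal{A}}^M$ is linearly independent under finite mixtures on $\mathcal{Y}$; (c2) the family $\mathcal{V}_{\mathcal{B}}=\{v_b(\mathbf{z},\mathbf{y}_M,\dots,\mathbf{y}_1):=p_b(\mathbf{z}_t=\mathbf{z}\mid\mathbf{z}_{t-1}=\mathbf{y}_M,\dots,\mathbf{z}_{t-M}=\mathbf{y}_1):b\in\mathcal{B}\}$ on $(\mathbb{R}^m)^{M+1}$ satisfies (b1), (b4), (b5) and (b6) with $d=m$. Define the trajectory family $\mathcal{P}^{T,M}_{\mathcal{A},\mathcal{B}}=\{p_a(\mathbf{z}_{1:M})\prod_{t=M+1}^Tp_{b_t}(\mathbf{z}_t\mid\mathbf{z}_{t-1},\dots,\mathbf{z}_{t-M}):a\in\mathcal{A},b_t\in\mathcal{B}\}$ on $\mathbb{R}^{mT}$. Then for any $T>M$, with $r=M$ if $T\equiv0\pmod M$ and $r=T\bmod M$ otherwise, and any set $\mathcal{Z}_r\subset(\mathbb{R}^m)^r$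 of positive measure, the trajectory family is linearly independent under finite mixtures on $(\mathbf{z}_{1:T-r},\mathbf{z}_{T-r+1:T})\in\mathbb{R}^{(T-r)m}\times\mathcal{Z}_r$.
   Context: Measures are Lebesgue; full measure means null complement. A family is linearly independent under finite mixtures on a set $D$ if every finite subfamily is linearly independent as functions on $D$. Conditions on $\mathcal{V}=\{v_b\}$ with $d=m$: (b1) $v_b>0$ everywhere. (b4) There is a full-measure $\mathcal{Y}\subset(\mathbb{R}^d)^M$ such that for all positive-measure $\mathcal{Y}'\subset\mathcal{Y}$ and $\mathcal{Z}\subset\mathbb{R}^d$, $\mathcal{V}$ is linearly independent under finite mixtures on $\mathcal{Z}\times\mathcal{Y}'$. (b5) For any $1\le\ell\le M$, $(\boldsymbol{\beta}_\ell,\dots,\boldsymbol{\beta}_1)\in(\mathbb{R}^d)^\ell$, positive-measure $\mathcal{Z}\subset\mathbb{R}^d$, $\mathcal{Y}\subset(\mathbb{R}^d)^{M-\ell}$ and finite $B_0\subset\mathcal{B}$: $\{v_b(\mathbf{z},\mathbf{y}_M,\dots,\mathbf{y}_{\ell+1},\boldsymbol{\beta}_\ell,\dots,\boldsymbol{\beta}_1):b\in B_0\}$ is linearly dependent on $\mathcal{Z}\times\mathcal{Y}$ only if there exist $b\ne b'\in B_0$ for which these functions coincide on all of $(\mathbb{R}^d)^{M-\ell+1}$. (b6) Each $v_b$ is continuous in $(\mathbf{y}_M,\dots,\mathbf{y}_1)$. *)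

theory Defs
  imports "HOL-Analysis.Analysis"
begin

text \<open>Points of (R^m)^k are represented as extensional functions on an index
set I of size k (a finite set of naturals), i.e. elements of PiE I UNIV.\<close>

definition Leb :: "nat set \<Rightarrow> (nat \<Rightarrow> 'x::euclidean_space) measure" where
  "Leb I = completion (PiM I (\<lambda>_. lborel))"

definition pos_meas :: "'x measure \<Rightarrow> 'x set \<Rightarrow> bool" where
  "pos_meas L S \<longleftrightarrow> S \<in> sets L \<and> emeasure L S > 0"

definition full_meas :: "'x measure \<Rightarrow> 'x set \<Rightarrow> bool" where
  "full_meas L S \<longleftrightarrow> S \<subseteq> space L \<and> space L - S \<in> null_sets L"

definition lin_indep_fm :: "('x \<Rightarrow> real) set \<Rightarrow> 'x set \<Rightarrow> bool" where
  "lin_indep_fm F D \<longleftrightarrow>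
     (\<forall>S c. S \<subseteq> F \<longrightarrow> finite S \<longrightarrow> (\<forall>x\<in>D. (\<Sum>f\<in>S. c f * f x) = 0) \<longrightarrow> (\<forall>f\<in>S. c f = 0))"

text \<open>Concatenation (z_{M},...,z_{l+1},beta_l,...,beta_1) of a free block y on
indices {l+1..M} and a fixed block beta on indices {1..l}.\<close>
definition merge_blk :: "nat \<Rightarrow> (nat \<Rightarrow> 'x) \<Rightarrow> (nat \<Rightarrow> 'x) \<Rightarrow> (nat \<Rightarrow> 'x)" where
  "merge_blk l beta y = (\<lambda>j. if j \<le> l then beta j else y j)"

text \<open>The trajectory density p_a(z_{1:M}) prod_{t=M+1}^T p_{b_t}(z_t | z_{t-1},...,z_{t-M}),
where v b z y = p_b(z_t = z | z_{t-1} = y_M, ..., z_{t-M} = y_1).\<close>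
definition traj :: "nat \<Rightarrow> nat \<Rightarrow> ((nat \<Rightarrow> 'x) \<Rightarrow> real) \<Rightarrow> (nat \<Rightarrow> 'x \<Rightarrow> (nat \<Rightarrow> 'x) \<Rightarrow> real)
                     \<Rightarrow> (nat \<Rightarrow> 'x) \<Rightarrow> real" where
  "traj M T pa vb z = pa (restrict z {1..M}) *
      (\<Prod>t\<in>{M+1..T}. vb t (z t) (\<lambda>j\<in>{1..M}. z (t - M - 1 + j)))"

end

(* Write T = k M + r with 1 <= r <= M and argue by induction on k.  Fix the first k M
   coordinates beta; a vanishing mixture of trajectory densities is then a mixture of products
   of transition kernels in the last r coordinates.  These are peeled off one at a time by
   Fubini: by (b5), linear dependence at a single time step makes two kernels coincide once
   some of their lags are fixed to entries of beta, and by (b4) and (b6) this happens only for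
   beta in a null set.  So for the "separating" beta, which have positive measure, the mixtures
   over the first k M coordinates vanish, and the induction hypothesis (for k = 1: condition
   (c1)) kills all coefficients. *)

theory Submission
  imports Defs
begin

section \<open>Products of Lebesgue measure\<close>

abbreviation lborelP :: "nat set \<Rightarrow> (nat \<Rightarrow> 'x::euclidean_space) measure" where
  "lborelP I \<equiv> PiM I (\<lambda>_. lborel)"

lemma product_sigma_finite_lborel:
  "product_sigma_finite (\<lambda>_::nat. lborel :: 'x::euclidean_space measure)"
  by (simp add: product_sigma_finite_def lborel.sigma_finite_measure_axioms)

lemma PiE_UNIV_in_sets_lborelP [simp]:
  "PiE I (\<lambda>_. UNIV) \<in> sets (lborelP I :: (nat \<Rightarrow> 'x::euclidean_space) measure)"
  using sets.top[of "lborelP I :: (nat \<Rightarrow> 'x) measure"] by (simp add: space_PiM)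

lemma emeasure_lborelP_space:
  assumes "finite I"
  shows "emeasure (lborelP I :: (nat \<Rightarrow> 'x::euclidean_space) measure) (PiE I (\<lambda>_. UNIV))
           = (if I = {} then 1 else \<infinity>)"
proof -
  interpret product_sigma_finite "\<lambda>_::nat. lborel :: 'x measure"
    by (rule product_sigma_finite_lborel)
  have "emeasure (lborelP I :: (nat \<Rightarrow> 'x) measure) (PiE I (\<lambda>_. UNIV))
      = (\<Prod>i\<in>I. emeasure lborel (UNIV :: 'x set))"
    using assms by (subst emeasure_PiM) auto
  then show ?thesis
    using assms by (simp add: power_eq_top_ennreal card_eq_0_iff)
qed

lemma measurable_lborelP_reindex:
  "f \<in> J \<rightarrow> I \<Longrightarrow> (\<lambda>u. \<lambda>j\<in>J. u (f j)) \<in> measurable (lborelP I) (lborelP J)"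
  by (intro measurable_restrict measurable_component_singleton) auto

lemma distr_lborelP_reindex:
  assumes "finite J" and bij: "bij_betw f J I"
  shows "distr (lborelP I) (lborelP J :: (nat \<Rightarrow> 'x::euclidean_space) measure)
           (\<lambda>u. \<lambda>j\<in>J. u (f j)) = lborelP J"
proof -
  interpret product_sigma_finite "\<lambda>_::nat. lborel :: 'x measure"
    by (rule product_sigma_finite_lborel)
  let ?g = "the_inv_into J f" and ?h = "\<lambda>u. \<lambda>j\<in>J. u (f j)"
  have f_J: "f \<in> J \<rightarrow> I" and g_I: "?g \<in> I \<rightarrow> J" and g_f: "\<And>j. j \<in> J \<Longrightarrow> ?g (f j) = j"
    and f_g: "\<And>i. i \<in> I \<Longrightarrow> f (?g i) = i"
    using bij by (auto simp: bij_betw_def the_inv_into_f_f f_the_inv_into_f the_inv_into_into)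
  show ?thesis
  proof (rule PiM_eqI[OF \<open>finite J\<close>])
    fix A :: "nat \<Rightarrow> 'x set" assume A: "\<And>j. j \<in> J \<Longrightarrow> A j \<in> sets lborel"
    have "?h -` Pi\<^sub>E J A \<inter> space (lborelP I) = Pi\<^sub>E I (\<lambda>i. A (?g i))"
      using f_J g_I g_f f_g by (auto simp: space_PiM PiE_iff Pi_iff) metis+
    then have "emeasure (distr (lborelP I) (lborelP J) ?h) (Pi\<^sub>E J A)
        = emeasure (lborelP I) (Pi\<^sub>E I (\<lambda>i. A (?g i)))"
      using A f_J \<open>finite J\<close>
      by (subst emeasure_distr) (auto intro!: sets_PiM_I_finite measurable_lborelP_reindex)
    also have "\<dots> = (\<Prod>i\<in>I. emeasure lborel (A (?g i)))"
      using A g_I bij_betw_finite[OF bij] \<open>finite J\<close> by (subst emeasure_PiM) auto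
    also have "\<dots> = (\<Prod>j\<in>J. emeasure lborel (A j))"
      using g_f by (simp add: prod.reindex_bij_betw[OF bij, symmetric])
    finally show "emeasure (distr (lborelP I) (lborelP J) ?h) (Pi\<^sub>E J A)
        = (\<Prod>j\<in>J. emeasure lborel (A j))" .
  qed simp
qed

lemma emeasure_lborelP_reindex:
  assumes "finite J" "bij_betw f J I" "K \<in> sets (lborelP J)"
  shows "emeasure (lborelP I) ((\<lambda>u. \<lambda>j\<in>J. u (f j)) -` K \<inter> space (lborelP I))
           = emeasure (lborelP J :: (nat \<Rightarrow> 'x::euclidean_space) measure) K"
proof -
  have "f \<in> J \<rightarrow> I" using assms(2) by (auto simp: bij_betw_def)
  then show ?thesis
    using emeasure_distr[OF measurable_lborelP_reindex[of f J I] assms(3)]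
    by (simp add: distr_lborelP_reindex[OF assms(1,2)])
qed

lemma sets_lborelP_cylinder:
  assumes "I \<subseteq> K" "A \<in> sets (lborelP I :: (nat \<Rightarrow> 'x::euclidean_space) measure)"
  shows "{x \<in> PiE K (\<lambda>_. UNIV). restrict x I \<in> A} \<in> sets (lborelP K :: (nat \<Rightarrow> 'x) measure)"
proof -
  have "{x \<in> PiE K (\<lambda>_. UNIV). restrict x I \<in> A}
      = (\<lambda>x. restrict x I) -` A \<inter> space (lborelP K :: (nat \<Rightarrow> 'x) measure)"
    by (auto simp: space_PiM)
  then show ?thesis
    using measurable_sets[OF measurable_restrict_subset[OF assms(1)] assms(2)] by simp
qed

lemma emeasure_lborelP_cylinder:
  assumes "I \<inter> J = {}" "finite I" "finite J"
    and A: "A \<in> sets (lborelP I :: (nat \<Rightarrow> 'x::euclidean_space) measure)"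
  shows "emeasure (lborelP (I \<union> J)) {x \<in> PiE (I \<union> J) (\<lambda>_. UNIV). restrict x I \<in> A}
           = emeasure (lborelP I) A * emeasure (lborelP J :: (nat \<Rightarrow> 'x) measure) (PiE J (\<lambda>_. UNIV))"
proof -
  interpret product_sigma_finite "\<lambda>_::nat. lborel :: 'x measure"
    by (rule product_sigma_finite_lborel)
  interpret J: sigma_finite_measure "lborelP J :: (nat \<Rightarrow> 'x) measure"
    using assms(3) by (rule sigma_finite)
  let ?X = "{x \<in> PiE (I \<union> J) (\<lambda>_. UNIV). restrict x I \<in> A}"
    and ?S = "PiE J (\<lambda>_. UNIV) :: (nat \<Rightarrow> 'x) set"
  have X: "?X \<in> sets (lborelP (I \<union> J))"
    using A by (intro sets_lborelP_cylinder) auto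
  have "merge I J -` ?X \<inter> space (lborelP I \<Otimes>\<^sub>M lborelP J) = A \<times> ?S"
  proof (intro set_eqI iffI)
    fix p assume p: "p \<in> merge I J -` ?X \<inter> space (lborelP I \<Otimes>\<^sub>M lborelP J)"
    obtain x y where xy: "p = (x, y)" by force
    have x: "x \<in> PiE I (\<lambda>_. UNIV)" and y: "y \<in> PiE J (\<lambda>_. UNIV)"
      using p xy by (auto simp: space_pair_measure space_PiM)
    have "restrict (merge I J (x, y)) I = x"
      using x by (auto simp: merge_def restrict_def PiE_iff extensional_def fun_eq_iff)
    then show "p \<in> A \<times> ?S" using p xy y by auto
  next
    fix p assume p: "p \<in> A \<times> ?S"
    obtain x y where xy: "p = (x, y)" by force
    have x: "x \<in> PiE I (\<lambda>_. UNIV)" and y: "y \<in> PiE J (\<lambda>_. UNIV)"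
      using p xy sets.sets_into_space[OF A] by (auto simp: space_PiM)
    have "restrict (merge I J (x, y)) I = x"
      using x by (auto simp: merge_def restrict_def PiE_iff extensional_def fun_eq_iff)
    moreover have "merge I J (x, y) \<in> PiE (I \<union> J) (\<lambda>_. UNIV)"
      using x y by (auto simp: merge_def PiE_iff extensional_def)
    ultimately show "p \<in> merge I J -` ?X \<inter> space (lborelP I \<Otimes>\<^sub>M lborelP J)"
      using p xy x y by (auto simp: space_pair_measure space_PiM)
  qed
  moreover have "emeasure (lborelP (I \<union> J)) ?X
      = emeasure (distr (lborelP I \<Otimes>\<^sub>M lborelP J) (lborelP (I \<union> J)) (merge I J)) ?X"
    by (simp only: distr_merge[OF assms(1-3)])
  ultimately have "emeasure (lborelP (I \<union> J)) ?X
      = emeasure (lborelP I \<Otimes>\<^sub>M lborelP J) (A \<times> ?S)"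
    using X by (simp add: emeasure_distr)
  also have "\<dots> = emeasure (lborelP I) A * emeasure (lborelP J) ?S"
    using J.emeasure_pair_measure_Times[OF A] by simp
  finally show ?thesis .
qed

lemma null_sets_lborelP_cylinder_iff:
  assumes "I \<inter> J = {}" "finite I" "finite J"
    and A: "A \<in> sets (lborelP I :: (nat \<Rightarrow> 'x::euclidean_space) measure)"
  shows "{x \<in> PiE (I \<union> J) (\<lambda>_. UNIV). restrict x I \<in> A} \<in> null_sets (lborelP (I \<union> J))
           \<longleftrightarrow> A \<in> null_sets (lborelP I)"
  using emeasure_lborelP_cylinder[OF assms] emeasure_lborelP_space[OF assms(3), where 'x='x]
    sets_lborelP_cylinder[OF _ A, of "I \<union> J"] A
  by (auto simp: null_sets_def split: if_splits)

lemma pos_meas_LebI: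
  "S \<in> sets (lborelP I) \<Longrightarrow> emeasure (lborelP I) S > 0 \<Longrightarrow> pos_meas (Leb I) S"
  by (simp add: pos_meas_def Leb_def)

lemma pos_meas_lebesgue_UNIV: "pos_meas lebesgue (UNIV :: 'x::euclidean_space set)"
  by (simp add: pos_meas_def)

lemma pos_meas_Leb_Int_full_meas:
  fixes H :: "(nat \<Rightarrow> 'x::euclidean_space) set"
  assumes "full_meas (Leb I) Y" "H \<in> sets (lborelP I)" "emeasure (lborelP I) H > 0"
  shows "pos_meas (Leb I) (H \<inter> Y)"
proof -
  let ?L = "Leb I :: (nat \<Rightarrow> 'x) measure"
  have N: "space ?L - Y \<in> null_sets ?L" and "Y \<subseteq> space ?L"
    using assms(1) by (auto simp: full_meas_def)
  have H: "H \<in> sets ?L"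
    using assms(2) by (simp add: Leb_def)
  have HY: "H \<inter> Y = H - (space ?L - Y)"
    using \<open>Y \<subseteq> space ?L\<close> sets.sets_into_space[OF H] by auto
  have "emeasure ?L (H \<inter> Y) = emeasure ?L H"
    unfolding HY by (rule emeasure_Diff_null_set[OF N H])
  also have "\<dots> = emeasure (lborelP I) H"
    using assms(2) by (simp add: Leb_def)
  finally show ?thesis
    using H N assms(3) unfolding pos_meas_def HY by auto
qed

lemma closed_PiE_UNIV: "closed (PiE I (\<lambda>_. UNIV) :: (nat \<Rightarrow> 'x::t2_space) set)"
proof -
  have "PiE I (\<lambda>_. UNIV) = (\<Inter>i\<in>-I. {f :: nat \<Rightarrow> 'x. f i = undefined})"
    by (auto simp: PiE_iff extensional_def)
  moreover have "closed {f :: nat \<Rightarrow> 'x. f i = undefined}" for i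
    by (intro closed_Collect_eq continuous_on_product_coordinates continuous_on_const)
  ultimately show ?thesis by auto
qed

lemma sets_lborelP_closed:
  assumes "closed C"
  shows "C \<inter> PiE I (\<lambda>_. UNIV) \<in> sets (lborelP I :: (nat \<Rightarrow> 'x::euclidean_space) measure)"
proof -
  have "C \<in> sets (PiM UNIV (\<lambda>_::nat. borel :: 'x measure))"
    using borel_closed[OF assms] by (simp only: sets_PiM_equal_borel)
  moreover have "(\<lambda>x i. x i) \<in> measurable (lborelP I :: (nat \<Rightarrow> 'x) measure) (PiM UNIV (\<lambda>_. borel))"
  proof (rule measurable_PiM_single')
    fix i
    show "(\<lambda>x. x i) \<in> measurable (lborelP I :: (nat \<Rightarrow> 'x) measure) borel"
    proof (cases "i \<in> I")
      case True
      then show ?thesis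
        using measurable_component_singleton[OF True, of "\<lambda>_. lborel"] by (simp only: measurable_lborel1)
    next
      case False
      then show ?thesis
        by (intro measurable_cong[THEN iffD1, OF _ measurable_const[of undefined]])
          (auto simp: space_PiM PiE_iff extensional_def)
    qed
  qed (auto simp: space_PiM)
  ultimately have "(\<lambda>x. x) -` C \<inter> space (lborelP I :: (nat \<Rightarrow> 'x) measure) \<in> sets (lborelP I)"
    by (rule measurable_sets[rotated])
  then show ?thesis by (simp add: space_PiM Int_commute)
qed

lemma sets_lborelP_common_zeros:
  fixes g :: "'y \<Rightarrow> (nat \<Rightarrow> 'x::euclidean_space) \<Rightarrow> real"
  assumes "\<And>x. x \<in> X \<Longrightarrow> continuous_on (PiE I (\<lambda>_. UNIV)) (g x)"
  shows "{w \<in> PiE I (\<lambda>_. UNIV). \<forall>x\<in>X. g x w = 0} \<in> sets (lborelP I :: (nat \<Rightarrow> 'x::euclidean_space) measure)"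
proof -
  have "closed {w \<in> PiE I (\<lambda>_. UNIV). g x w = 0}" if "x \<in> X" for x
    by (rule closedin_closed_trans[OF continuous_closedin_preimage_constant[OF assms[OF that]]
          closed_PiE_UNIV])
  then have "closed (\<Inter>x\<in>X. {w \<in> PiE I (\<lambda>_. UNIV). g x w = 0})"
    by blast
  moreover have "{w \<in> PiE I (\<lambda>_. UNIV). \<forall>x\<in>X. g x w = 0}
      = (\<Inter>x\<in>X. {w \<in> PiE I (\<lambda>_. UNIV). g x w = 0}) \<inter> PiE I (\<lambda>_. UNIV)"
    by blast
  ultimately show ?thesis by (simp only: sets_lborelP_closed)
qed

lemma lborelP_positive_sections:
  assumes "finite W" "t \<notin> W"
    and Z: "Z \<in> sets (lborelP (insert t W))" "emeasure (lborelP (insert t W)) Z > 0"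
  obtains P where "P \<in> sets (lborelP W :: (nat \<Rightarrow> 'x::euclidean_space) measure)"
    "emeasure (lborelP W) P > 0"
    "\<And>w. w \<in> P \<Longrightarrow> {x. w(t := x) \<in> Z} \<in> sets lborel \<and> emeasure lborel {x. w(t := x) \<in> Z} > 0"
proof -
  interpret product_sigma_finite "\<lambda>_::nat. lborel :: 'x measure"
    by (rule product_sigma_finite_lborel)
  define g where "g w = emeasure lborel {x. w(t := x) \<in> Z}" for w :: "nat \<Rightarrow> 'x"
  have section_sets: "{x. w(t := x) \<in> Z} \<in> sets lborel" if "w \<in> space (lborelP W)" for w
    using measurable_sets[OF measurable_component_update[OF that assms(2)] Z(1)] by (simp add: vimage_def)
  have g_int: "g w = (\<integral>\<^sup>+ x. indicator Z (w(t := x)) \<partial>lborel)" if "w \<in> space (lborelP W)" for w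
    using section_sets[OF that] by (simp add: g_def nn_integral_indicator[symmetric] indicator_def)
  have Z_ind: "(\<lambda>u. indicator Z u :: ennreal) \<in> borel_measurable (lborelP (insert t W))"
    using Z(1) by simp
  have "(\<lambda>p. indicator Z ((\<lambda>(f, y). f(t := y)) p) :: ennreal)
      \<in> borel_measurable (lborelP W \<Otimes>\<^sub>M lborel)"
    using measurable_comp[OF measurable_add_dim Z_ind] by (simp add: o_def)
  from lborel.borel_measurable_nn_integral_fst[OF this]
  have "(\<lambda>w. \<integral>\<^sup>+ x. indicator Z (w(t := x)) \<partial>lborel) \<in> borel_measurable (lborelP W)"
    by simp
  then have g_meas: "g \<in> borel_measurable (lborelP W)"
    by (rule measurable_cong[THEN iffD1, rotated]) (simp add: g_int)
  have "emeasure (lborelP (insert t W)) Z = (\<integral>\<^sup>+ w. g w \<partial>lborelP W)"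
    using Z(1) product_nn_integral_insert[OF assms(1,2) Z_ind]
    by (simp add: g_int cong: nn_integral_cong)
  then have "(\<integral>\<^sup>+ w. g w \<partial>lborelP W) \<noteq> 0" using Z(2) by simp
  then have "\<not> (AE w in lborelP W. g w = 0)"
    using g_meas by (simp add: nn_integral_0_iff_AE)
  moreover define P where "P = {w \<in> space (lborelP W). g w \<noteq> 0}"
  ultimately have "emeasure (lborelP W) P \<noteq> 0"
    using g_meas by (subst (asm) AE_iff_measurable[OF _ refl]) (auto simp: P_def)
  show ?thesis
  proof (rule that)
    show "P \<in> sets (lborelP W)"
      unfolding P_def using g_meas by measurable
    show "emeasure (lborelP W) P > 0"
      using \<open>emeasure (lborelP W) P \<noteq> 0\<close> not_gr_zero by blast
    show "{x. w(t := x) \<in> Z} \<in> sets lborel \<and> emeasure lborel {x. w(t := x) \<in> Z} > 0"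
      if "w \<in> P" for w
      using that section_sets by (auto simp: P_def g_def intro: gr_zeroI)
  qed
qed

lemma pos_meas_LebE:
  fixes Z :: "(nat \<Rightarrow> 'x::euclidean_space) set"
  assumes "pos_meas (Leb I) Z"
  obtains Z' where "Z' \<subseteq> Z" "Z' \<in> sets (lborelP I)" "emeasure (lborelP I) Z' > 0"
proof
  have Z: "Z \<in> sets (completion (lborelP I))" "emeasure (completion (lborelP I)) Z > 0"
    using assms unfolding pos_meas_def Leb_def by blast+
  show "main_part (lborelP I) Z \<subseteq> Z"
    using main_part_null_part_Un[OF Z(1)] by blast
  show "main_part (lborelP I) Z \<in> sets (lborelP I)"
    using Z(1) by (rule main_part_sets)
  show "emeasure (lborelP I) (main_part (lborelP I) Z) > 0"
    using Z(2) by (simp only: emeasure_completion[OF Z(1)])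
qed

section \<open>Linear independence under finite mixtures\<close>

lemma lin_indep_fm_subset:
  "lin_indep_fm F D \<Longrightarrow> D \<subseteq> D' \<Longrightarrow> lin_indep_fm F D'"
  unfolding lin_indep_fm_def by blast

lemma lin_indep_fm_imageI:
  assumes "\<And>X0 c. X0 \<subseteq> X \<Longrightarrow> finite X0 \<Longrightarrow> \<forall>z\<in>D. (\<Sum>x\<in>X0. c x * \<phi> x z) = 0 \<Longrightarrow>
             \<forall>x\<in>X0. c x = 0"
  shows "lin_indep_fm (\<phi> ` X) D"
  unfolding lin_indep_fm_def
proof (intro allI impI)
  fix S c assume S: "S \<subseteq> \<phi> ` X" "finite S" and vanish: "\<forall>z\<in>D. (\<Sum>f\<in>S. c f * f z) = 0"
  let ?X0 = "inv_into X \<phi> ` S"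
  have \<phi>_inv: "\<phi> (inv_into X \<phi> f) = f" if "f \<in> S" for f
    using S(1) that by (auto simp: f_inv_into_f)
  have inj: "inj_on \<phi> ?X0"
    by (auto intro!: inj_onI simp: \<phi>_inv)
  have S_eq: "S = \<phi> ` ?X0"
    by (force simp: \<phi>_inv image_image)
  have "\<forall>x\<in>?X0. c (\<phi> x) = 0"
  proof (rule assms)
    show "?X0 \<subseteq> X" using S(1) by (auto intro: inv_into_into)
    show "finite ?X0" using S(2) by simp
    show "\<forall>z\<in>D. (\<Sum>x\<in>?X0. c (\<phi> x) * \<phi> x z) = 0"
      using vanish by (subst (asm) S_eq) (simp add: sum.reindex[OF inj])
  qed
  then show "\<forall>f\<in>S. c f = 0"
    by (subst S_eq) simp
qed

lemma lin_indep_fm_imageD: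
  assumes "lin_indep_fm (\<phi> ` X) D" "X0 \<subseteq> X" "finite X0" "inj_on \<phi> X0"
    and "\<forall>z\<in>D. (\<Sum>x\<in>X0. c x * \<phi> x z) = 0"
  shows "\<forall>x\<in>X0. c x = 0"
proof -
  let ?c = "\<lambda>f. c (inv_into X0 \<phi> f)"
  have "\<forall>f\<in>\<phi> ` X0. ?c f = 0"
    using assms(1) unfolding lin_indep_fm_def
  proof (elim allE impE)
    show "\<phi> ` X0 \<subseteq> \<phi> ` X" "finite (\<phi> ` X0)" using assms(2,3) by auto
    show "\<forall>z\<in>D. (\<Sum>f\<in>\<phi> ` X0. ?c f * f z) = 0"
      using assms(4,5) by (simp add: sum.reindex)
  qed
  then show ?thesis
    using assms(4) by simp
qed

lemma obtain_inj_on_representatives: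
  obtains X' where "X' \<subseteq> X" "inj_on h X'" "h ` X' = h ` X"
proof
  show "inv_into X h ` h ` X \<subseteq> X" by (auto intro: inv_into_into)
  show "inj_on h (inv_into X h ` h ` X)" by (auto intro!: inj_onI simp: f_inv_into_f)
  show "h ` inv_into X h ` h ` X = h ` X" by (force simp: f_inv_into_f image_image)
qed

section \<open>Histories\<close>

text \<open>\<open>history M t z j = z (t - M - 1 + j)\<close>: index \<open>1\<close> is the oldest lag \<open>z (t - M)\<close>, index \<open>M\<close>
  the newest \<open>z (t - 1)\<close>, matching \<open>traj\<close> and the argument order \<open>y\<^sub>1, \<dots>, y\<^sub>M\<close> of the paper.\<close>
definition history :: "nat \<Rightarrow> nat \<Rightarrow> (nat \<Rightarrow> 'x) \<Rightarrow> nat \<Rightarrow> 'x" where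
  "history M t z = (\<lambda>j\<in>{1..M}. z (t - M - 1 + j))"

lemma history_PiE [simp]: "history M t z \<in> PiE {1..M} (\<lambda>_. UNIV)"
  by (simp add: history_def)

lemma traj_eq_history:
  "traj M T pa vb z = pa (restrict z {1..M}) * (\<Prod>t\<in>{M+1..T}. vb t (z t) (history M t z))"
  by (simp add: traj_def history_def)

lemma traj_self:
  "\<beta> \<in> PiE {1..M} (\<lambda>_. UNIV) \<Longrightarrow> traj M M pa vb \<beta> = pa \<beta>"
  by (simp add: traj_def PiE_restrict)

lemma history_fun_upd: "M < t' \<Longrightarrow> t' \<le> t \<Longrightarrow> history M t' (z(t := x)) = history M t' z"
  by (auto simp: history_def fun_eq_iff)

lemma merge_blk_fun_upd: "n < t \<Longrightarrow> merge_blk n \<beta> (w(t := x)) = (merge_blk n \<beta> w)(t := x)"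
  by (auto simp: merge_blk_def fun_eq_iff)

lemma history_merge_blk_low: "M < t \<Longrightarrow> t \<le> n \<Longrightarrow> history M t (merge_blk n \<beta> u) = history M t \<beta>"
  by (auto simp: history_def merge_blk_def fun_eq_iff)

text \<open>The history of time \<open>n + s + 1\<close> consists of the last \<open>M - s\<close> entries of \<open>\<beta>\<close>,
  followed by \<open>u\<close>.\<close>
lemma history_merge_blk_shift:
  assumes "M \<le> n" "s < M" "l = M - s" "y \<in> PiE {l+1..M} (\<lambda>_. UNIV)"
  shows "history M (n + Suc s) (merge_blk n \<beta> (\<lambda>i\<in>{n+1..n+s}. y (i - n + l)))
       = merge_blk l (\<lambda>j\<in>{1..l}. \<beta> (n - l + j)) y"
proof
  fix j
  show "history M (n + Suc s) (merge_blk n \<beta> (\<lambda>i\<in>{n+1..n+s}. y (i - n + l))) j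
      = merge_blk l (\<lambda>j\<in>{1..l}. \<beta> (n - l + j)) y j"
  proof (cases "j \<in> {1..M}")
    case True
    then have "n + Suc s - M - 1 + j = n - l + j" using assms by auto
    then show ?thesis
      using assms True by (cases "j \<le> l") (auto simp: history_def merge_blk_def)
  next
    case False
    then show ?thesis
      using assms by (auto simp: history_def merge_blk_def PiE_iff extensional_def)
  qed
qed

lemma continuous_on_merge_blk: "continuous_on S (\<lambda>u. merge_blk l u y)"
proof (intro continuous_on_coordinatewise_then_product)
  fix j
  show "continuous_on S (\<lambda>u. merge_blk l u y j)"
    by (cases "j \<le> l") (simp_all add: merge_blk_def continuous_on_const
        continuous_on_subset[OF continuous_on_product_coordinates])
qed

lemma continuous_on_history_merge_blk: "continuous_on S (\<lambda>w. history M t (merge_blk n \<beta> w))"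
proof (intro continuous_on_coordinatewise_then_product)
  fix j
  show "continuous_on S (\<lambda>w. history M t (merge_blk n \<beta> w) j)"
  proof (cases "j \<in> {1..M}")
    case True
    then show ?thesis
      by (cases "t - M - 1 + j \<le> n") (simp_all add: history_def merge_blk_def
          continuous_on_const continuous_on_subset[OF continuous_on_product_coordinates])
  next
    case False
    then have "(\<lambda>w. history M t (merge_blk n \<beta> w) j) = (\<lambda>_. undefined)"
      by (auto simp: history_def)
    then show ?thesis by (metis continuous_on_const)
  qed
qed

lemma merge_blk_PiE:
  "u \<in> PiE {m..l} X \<Longrightarrow> y \<in> PiE {l+1..n} X \<Longrightarrow> m \<le> l + 1 \<Longrightarrow> l \<le> n \<Longrightarrow>
    merge_blk l u y \<in> PiE {m..n} X"
  by (auto simp: merge_blk_def PiE_iff extensional_def)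

lemma merge_blk_restrict:
  "z \<in> PiE {m..n} X \<Longrightarrow> m \<le> l + 1 \<Longrightarrow> l \<le> n \<Longrightarrow>
    merge_blk l (restrict z {m..l}) (restrict z {l+1..n}) = z"
  by (auto simp: merge_blk_def PiE_iff extensional_def fun_eq_iff)

lemma merge_blk_undefined: "\<beta> \<in> PiE {1..l} X \<Longrightarrow> merge_blk l \<beta> (\<lambda>_. undefined) = \<beta>"
  by (auto simp: merge_blk_def PiE_iff extensional_def fun_eq_iff)

lemma restrict_merge_blk_high:
  "y \<in> PiE {l+1..n} X \<Longrightarrow> restrict (merge_blk l u y) {l+1..n} = y"
  by (auto simp: merge_blk_def PiE_iff extensional_def fun_eq_iff)

lemma sum_PiE_merge_blk:
  assumes "m \<le> l + 1" "l \<le> n"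
  shows "(\<Sum>\<sigma>\<in>PiE {m..n} (\<lambda>_. X). f \<sigma>)
       = (\<Sum>\<sigma>1\<in>PiE {m..l} (\<lambda>_. X). \<Sum>\<sigma>2\<in>PiE {l+1..n} (\<lambda>_. X). f (merge_blk l \<sigma>1 \<sigma>2))"
proof -
  have "(\<Sum>\<sigma>\<in>PiE {m..n} (\<lambda>_. X). f \<sigma>)
      = (\<Sum>p\<in>PiE {m..l} (\<lambda>_. X) \<times> PiE {l+1..n} (\<lambda>_. X). f (merge_blk l (fst p) (snd p)))"
  proof (rule sum.reindex_bij_witness[where j="\<lambda>\<sigma>. (restrict \<sigma> {m..l}, restrict \<sigma> {l+1..n})"
        and i="\<lambda>p. merge_blk l (fst p) (snd p)"])
    fix p assume "p \<in> PiE {m..l} (\<lambda>_. X) \<times> PiE {l+1..n} (\<lambda>_. X)"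
    then show "(restrict (merge_blk l (fst p) (snd p)) {m..l}, restrict (merge_blk l (fst p) (snd p)) {l+1..n}) = p"
      and "merge_blk l (fst p) (snd p) \<in> PiE {m..n} (\<lambda>_. X)"
      using assms by (auto simp: merge_blk_def PiE_iff extensional_def fun_eq_iff)
  next
    fix \<sigma> assume "\<sigma> \<in> PiE {m..n} (\<lambda>_. X)"
    then have "merge_blk l (restrict \<sigma> {m..l}) (restrict \<sigma> {l+1..n}) = \<sigma>"
      using assms by (rule merge_blk_restrict)
    then show "merge_blk l (fst (restrict \<sigma> {m..l}, restrict \<sigma> {l+1..n}))
        (snd (restrict \<sigma> {m..l}, restrict \<sigma> {l+1..n})) = \<sigma>"
      and "f (merge_blk l (fst (restrict \<sigma> {m..l}, restrict \<sigma> {l+1..n}))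
        (snd (restrict \<sigma> {m..l}, restrict \<sigma> {l+1..n}))) = f \<sigma>"
      and "(restrict \<sigma> {m..l}, restrict \<sigma> {l+1..n}) \<in> PiE {m..l} (\<lambda>_. X) \<times> PiE {l+1..n} (\<lambda>_. X)"
      using \<open>\<sigma> \<in> PiE {m..n} (\<lambda>_. X)\<close> assms by (auto simp: PiE_iff)
  qed
  then show ?thesis
    by (simp add: sum.cartesian_product split_def)
qed

lemma sum_PiE_insert:
  assumes "t \<notin> W"
  shows "(\<Sum>\<sigma>\<in>PiE (insert t W) (\<lambda>_. X). f \<sigma>) = (\<Sum>b\<in>X. \<Sum>\<sigma>\<in>PiE W (\<lambda>_. X). f (\<sigma>(t := b)))"
proof -
  have "inj_on (\<lambda>(y, g). g(t := y)) (X \<times> PiE W (\<lambda>_. X))"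
    using inj_combinator[OF assms, of "\<lambda>_. X"] by simp
  then show ?thesis
    unfolding PiE_insert_eq by (simp add: sum.reindex sum.cartesian_product split_def)
qed

section \<open>Lagged transition kernels\<close>

locale lagged_kernels =
  fixes M :: nat and B :: "'b set" and v :: "'b \<Rightarrow> 'x::euclidean_space \<Rightarrow> (nat \<Rightarrow> 'x) \<Rightarrow> real"
  assumes M_pos: "0 < M"
    and b5: "\<forall>l beta Z Y B0 c. 1 \<le> l \<longrightarrow> l \<le> M \<longrightarrow> beta \<in> PiE {1..l} (\<lambda>_. UNIV) \<longrightarrow>
               pos_meas lebesgue Z \<longrightarrow> pos_meas (Leb {l+1..M}) Y \<longrightarrow>
               finite B0 \<longrightarrow> B0 \<subseteq> B \<longrightarrow>
               (\<exists>b\<in>B0. c b \<noteq> (0::real)) \<longrightarrow>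
               (\<forall>z\<in>Z. \<forall>y\<in>Y. (\<Sum>b\<in>B0. c b * v b z (merge_blk l beta y)) = 0) \<longrightarrow>
               (\<exists>b\<in>B0. \<exists>b'\<in>B0. b \<noteq> b' \<and>
                  (\<forall>z. \<forall>y\<in>PiE {l+1..M} (\<lambda>_. UNIV).
                     v b z (merge_blk l beta y) = v b' z (merge_blk l beta y)))"
    and b6: "\<forall>b\<in>B. \<forall>z. continuous_on (PiE {1..M} (\<lambda>_. UNIV)) (\<lambda>y. v b z y)"
begin

definition agree :: "'b \<Rightarrow> 'b \<Rightarrow> (nat \<Rightarrow> 'x) \<Rightarrow> bool" where
  "agree b b' y \<longleftrightarrow> (\<forall>z. v b z y = v b' z y)"

definition coincide :: "nat \<Rightarrow> (nat \<Rightarrow> 'x) \<Rightarrow> 'b \<Rightarrow> 'b \<Rightarrow> bool" where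
  "coincide l \<beta> b b' \<longleftrightarrow> (\<forall>y\<in>PiE {l+1..M} (\<lambda>_. UNIV). agree b b' (merge_blk l \<beta> y))"

text \<open>\<open>\<lambda>j\<in>{1..l}. \<beta> (n - l + j)\<close> are the last \<open>l\<close> entries of \<open>\<beta>\<close>, seen as the oldest \<open>l\<close>
  lags of the history of time \<open>n + M - l + 1\<close>.\<close>
definition separating :: "nat \<Rightarrow> 'b set \<Rightarrow> (nat \<Rightarrow> 'x) \<Rightarrow> bool" where
  "separating n B0 \<beta> \<longleftrightarrow> (\<forall>b\<in>B0. \<forall>b'\<in>B0. b \<noteq> b' \<longrightarrow>
      (\<forall>l\<in>{1..M}. \<not> coincide l (\<lambda>j\<in>{1..l}. \<beta> (n - l + j)) b b'))"

definition tail_kernels :: "nat \<Rightarrow> nat \<Rightarrow> (nat \<Rightarrow> 'b) \<Rightarrow> (nat \<Rightarrow> 'x) \<Rightarrow> real" where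
  "tail_kernels n T \<sigma> z = (\<Prod>t\<in>{n+1..T}. v (\<sigma> t) (z t) (history M t z))"

lemma agree_commute: "agree b b' y \<longleftrightarrow> agree b' b y"
  by (auto simp: agree_def)

lemma coincide_commute: "coincide l \<beta> b b' \<longleftrightarrow> coincide l \<beta> b' b"
  by (auto simp: coincide_def agree_commute)

lemma coincide_M_iff: "\<beta> \<in> PiE {1..M} (\<lambda>_. UNIV) \<Longrightarrow> coincide M \<beta> b b' \<longleftrightarrow> agree b b' \<beta>"
  by (simp add: coincide_def merge_blk_undefined)

lemma separatingD:
  "separating n B0 \<beta> \<Longrightarrow> b \<in> B0 \<Longrightarrow> b' \<in> B0 \<Longrightarrow> b \<noteq> b' \<Longrightarrow> l \<in> {1..M} \<Longrightarrow>
    \<not> coincide l (\<lambda>j\<in>{1..l}. \<beta> (n - l + j)) b b'"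
  unfolding separating_def by (elim ballE allE impE) auto

lemma separating_restrict:
  "M \<le> n \<Longrightarrow> separating n B0 (restrict \<beta> {n-M+1..n}) \<longleftrightarrow> separating n B0 \<beta>"
proof -
  assume "M \<le> n"
  then have "(\<lambda>j\<in>{1..l}. restrict \<beta> {n-M+1..n} (n - l + j)) = (\<lambda>j\<in>{1..l}. \<beta> (n - l + j))"
    if "l \<in> {1..M}" for l
    using that by (auto simp: fun_eq_iff)
  then show ?thesis
    by (simp add: separating_def)
qed

lemma dependent_imp_coincide:
  assumes "1 \<le> l" "l \<le> M" "\<beta> \<in> PiE {1..l} (\<lambda>_. UNIV)"
    and "pos_meas lebesgue Z" "pos_meas (Leb {l+1..M}) Y" "finite B0" "B0 \<subseteq> B"
    and "\<exists>b\<in>B0. c b \<noteq> 0" "\<forall>z\<in>Z. \<forall>y\<in>Y. (\<Sum>b\<in>B0. c b * v b z (merge_blk l \<beta> y)) = 0"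
  obtains b b' where "b \<in> B0" "b' \<in> B0" "b \<noteq> b'" "coincide l \<beta> b b'"
  using b5[rule_format, OF assms(1-8) assms(9)[rule_format]] that
  by (auto simp: coincide_def agree_def)

lemma agree_on_pos_meas_imp_coincide:
  assumes "1 \<le> l" "l \<le> M" "\<beta> \<in> PiE {1..l} (\<lambda>_. UNIV)" "b \<in> B" "b' \<in> B"
    and "pos_meas (Leb {l+1..M}) Y" "\<forall>y\<in>Y. agree b b' (merge_blk l \<beta> y)"
  shows "coincide l \<beta> b b'"
proof (cases "b = b'")
  case True
  then show ?thesis by (simp add: coincide_def agree_def)
next
  case False
  obtain c c' where "c \<in> {b, b'}" "c' \<in> {b, b'}" "c \<noteq> c'" "coincide l \<beta> c c'"
  proof (rule dependent_imp_coincide[of l \<beta> UNIV Y "{b, b'}" "\<lambda>x. if x = b then 1 else -1"])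
    show "\<forall>z\<in>UNIV. \<forall>y\<in>Y. (\<Sum>x\<in>{b, b'}. (if x = b then 1 else -1) * v x z (merge_blk l \<beta> y)) = 0"
      using assms(7) False by (simp add: agree_def)
    show "{b, b'} \<subseteq> B" using assms(4,5) by simp
    show "\<exists>x\<in>{b, b'}. (if x = b then 1 else -1) \<noteq> (0::real)" by simp
  qed (use assms pos_meas_lebesgue_UNIV in auto)
  then show ?thesis
    by (auto simp: coincide_commute)
qed

lemma kernels_lin_indep_at:
  assumes "finite B0" "B0 \<subseteq> B" "y \<in> PiE {1..M} (\<lambda>_. UNIV)"
    and S: "S \<in> sets lborel" "emeasure lborel S > 0"
    and distinct: "\<forall>b\<in>B0. \<forall>b'\<in>B0. b \<noteq> b' \<longrightarrow> \<not> agree b b' y"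
    and vanish: "\<forall>x\<in>S. (\<Sum>b\<in>B0. e b * v b x y) = 0"
  shows "\<forall>b\<in>B0. e b = 0"
proof (rule ccontr)
  assume nonzero: "\<not> ?thesis"
  obtain b b' where "b \<in> B0" "b' \<in> B0" "b \<noteq> b'" "coincide M y b b'"
  proof (rule dependent_imp_coincide[of M y S "{\<lambda>_. undefined}" B0 e])
    show "\<exists>b\<in>B0. e b \<noteq> 0" using nonzero by blast
    show "pos_meas (Leb {M+1..M}) {\<lambda>_. undefined}"
      by (simp add: pos_meas_def Leb_def PiM_empty)
    show "\<forall>z\<in>S. \<forall>u\<in>{\<lambda>_. undefined}. (\<Sum>b\<in>B0. e b * v b z (merge_blk M y u)) = 0"
      using vanish assms(3) by (simp add: merge_blk_undefined)
    show "pos_meas lebesgue S"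
      using S by (simp add: pos_meas_def)
  qed (use assms M_pos in auto)
  then show False
    using distinct assms(3) by (simp add: coincide_M_iff)
qed

lemma sets_lborelP_agree:
  assumes "b \<in> B" "b' \<in> B"
    and "\<And>y. y \<in> Y \<Longrightarrow> continuous_on (PiE I (\<lambda>_. UNIV)) (g y)"
    and "\<And>y. y \<in> Y \<Longrightarrow> g y \<in> PiE I (\<lambda>_. UNIV) \<rightarrow> PiE {1..M} (\<lambda>_. UNIV)"
  shows "{w \<in> PiE I (\<lambda>_. UNIV). \<forall>y\<in>Y. agree b b' (g y w)} \<in> sets (lborelP I)"
proof -
  have cont: "continuous_on (PiE I (\<lambda>_. UNIV)) (\<lambda>w. v c z (g y w))" if "c \<in> B" "y \<in> Y" for c z y
  proof (rule continuous_on_compose2[of "PiE {1..M} (\<lambda>_. UNIV)" "\<lambda>u. v c z u"])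
    show "continuous_on (PiE {1..M} (\<lambda>_. UNIV)) (\<lambda>u. v c z u)"
      using b6 that(1) by blast
    show "continuous_on (PiE I (\<lambda>_. UNIV)) (g y)"
      using assms(3) that(2) .
    show "g y ` PiE I (\<lambda>_. UNIV) \<subseteq> PiE {1..M} (\<lambda>_. UNIV)"
      using assms(4)[OF that(2)] by blast
  qed
  have "{w \<in> PiE I (\<lambda>_. UNIV). \<forall>p\<in>Y \<times> UNIV. v b (snd p) (g (fst p) w) - v b' (snd p) (g (fst p) w) = 0}
      \<in> sets (lborelP I)"
  proof (rule sets_lborelP_common_zeros)
    fix p :: "_ \<times> 'x" assume "p \<in> Y \<times> UNIV"
    then show "continuous_on (PiE I (\<lambda>_. UNIV)) (\<lambda>w. v b (snd p) (g (fst p) w) - v b' (snd p) (g (fst p) w))"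
      using cont assms(1,2) by (intro continuous_on_diff) auto
  qed
  moreover have "{w \<in> PiE I (\<lambda>_. UNIV). \<forall>p\<in>Y \<times> UNIV. v b (snd p) (g (fst p) w) - v b' (snd p) (g (fst p) w) = 0}
      = {w \<in> PiE I (\<lambda>_. UNIV). \<forall>y\<in>Y. agree b b' (g y w)}"
    by (auto simp: agree_def)
  ultimately show ?thesis by simp
qed

text \<open>The positive measure set of blocks \<open>w\<close> on which \<open>b\<close> and \<open>b'\<close> agree is turned, by
  an index shift, into a positive measure set of completions of the last \<open>M - s\<close>
  entries of \<open>\<beta>\<close> on which they agree; (b5) then forces them to coincide.\<close>
lemma history_agreement_null:
  assumes "M \<le> n" "s < M" "b \<in> B" "b' \<in> B"
    and sep: "\<not> coincide (M - s) (\<lambda>j\<in>{1..M-s}. \<beta> (n - (M - s) + j)) b b'"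
  shows "{w \<in> PiE {n+1..n+s} (\<lambda>_. UNIV). agree b b' (history M (n + Suc s) (merge_blk n \<beta> w))}
           \<in> null_sets (lborelP {n+1..n+s})"
    (is "?E \<in> null_sets (lborelP ?W)")
proof -
  define l where "l = M - s"
  have l: "1 \<le> l" "l \<le> M" using assms(2) by (auto simp: l_def)
  have "{w \<in> PiE ?W (\<lambda>_. UNIV). \<forall>y\<in>{()}. agree b b' (history M (n + Suc s) (merge_blk n \<beta> w))}
      \<in> sets (lborelP ?W)"
    by (rule sets_lborelP_agree[OF assms(3,4)])
      (rule continuous_on_history_merge_blk, rule funcsetI, rule history_PiE)
  then have E: "?E \<in> sets (lborelP ?W)" by simp
  have bij: "bij_betw (\<lambda>i. i - n + l) ?W {l+1..M}"
    by (rule bij_betw_byWitness[where f'="\<lambda>j. j - l + n"]) (use assms(2) in \<open>auto simp: l_def\<close>)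
  define Y where "Y = (\<lambda>y. \<lambda>i\<in>?W. y (i - n + l)) -` ?E \<inter> space (lborelP {l+1..M})"
  have Y: "Y \<in> sets (lborelP {l+1..M})"
    unfolding Y_def using bij E
    by (intro measurable_sets[OF measurable_lborelP_reindex]) (auto simp: bij_betw_def)
  have emeasure_Y: "emeasure (lborelP {l+1..M}) Y = emeasure (lborelP ?W) ?E"
    unfolding Y_def by (rule emeasure_lborelP_reindex[OF _ bij E]) simp
  have "agree b b' (merge_blk l (\<lambda>j\<in>{1..l}. \<beta> (n - l + j)) y)" if "y \<in> Y" for y
  proof -
    have "y \<in> PiE {l+1..M} (\<lambda>_. UNIV)" using that by (simp add: Y_def space_PiM)
    from history_merge_blk_shift[OF assms(1,2) l_def this, of \<beta>]
    show ?thesis using that by (simp add: Y_def)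
  qed
  then have "\<not> pos_meas (Leb {l+1..M}) Y"
    using agree_on_pos_meas_imp_coincide[OF l, of "\<lambda>j\<in>{1..l}. \<beta> (n - l + j)" b b' Y] assms(3,4) sep
    by (auto simp: l_def)
  then have "\<not> emeasure (lborelP {l+1..M}) Y > 0"
    using pos_meas_LebI[OF Y] by blast
  then have "emeasure (lborelP ?W) ?E = 0"
    by (simp only: emeasure_Y not_gr_zero)
  then show ?thesis
    using E by (intro null_setsI)
qed

lemma tail_kernels_Suc:
  "n \<le> T \<Longrightarrow> tail_kernels n (Suc T) \<sigma> z
     = tail_kernels n T \<sigma> z * v (\<sigma> (Suc T)) (z (Suc T)) (history M (Suc T) z)"
  by (simp add: tail_kernels_def atLeastAtMostSuc_conv mult.commute)

lemma tail_kernels_fun_upd: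
  "M \<le> n \<Longrightarrow> T < t \<Longrightarrow> tail_kernels n T (\<sigma>(t := b)) (z(t := x)) = tail_kernels n T \<sigma> z"
  unfolding tail_kernels_def by (intro prod.cong refl) (auto simp: history_fun_upd)

lemma sum_tail_kernels_Suc:
  assumes "M \<le> n" "n \<le> T"
  shows "(\<Sum>\<sigma>\<in>PiE {n+1..Suc T} (\<lambda>_. B0). d \<sigma> * tail_kernels n (Suc T) \<sigma> (merge_blk n \<beta> (w(Suc T := x))))
       = (\<Sum>b\<in>B0. (\<Sum>\<sigma>\<in>PiE {n+1..T} (\<lambda>_. B0). d (\<sigma>(Suc T := b)) * tail_kernels n T \<sigma> (merge_blk n \<beta> w))
            * v b x (history M (Suc T) (merge_blk n \<beta> w)))"
proof -
  let ?z = "merge_blk n \<beta> w"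
  have factor: "tail_kernels n (Suc T) (\<sigma>(Suc T := b)) (merge_blk n \<beta> (w(Suc T := x)))
      = tail_kernels n T \<sigma> ?z * v b x (history M (Suc T) ?z)" for \<sigma> b
  proof -
    have "merge_blk n \<beta> (w(Suc T := x)) = ?z(Suc T := x)"
      using assms by (simp add: merge_blk_fun_upd)
    moreover have "tail_kernels n (Suc T) (\<sigma>(Suc T := b)) (?z(Suc T := x))
        = tail_kernels n T (\<sigma>(Suc T := b)) (?z(Suc T := x)) * v b x (history M (Suc T) (?z(Suc T := x)))"
      using tail_kernels_Suc[OF assms(2)] by simp
    moreover have "tail_kernels n T (\<sigma>(Suc T := b)) (?z(Suc T := x)) = tail_kernels n T \<sigma> ?z"
      using assms by (intro tail_kernels_fun_upd) auto
    moreover have "history M (Suc T) (?z(Suc T := x)) = history M (Suc T) ?z"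
      using assms by (intro history_fun_upd) auto
    ultimately show ?thesis by simp
  qed
  have "{n+1..Suc T} = insert (Suc T) {n+1..T}" using assms by auto
  then have "(\<Sum>\<sigma>\<in>PiE {n+1..Suc T} (\<lambda>_. B0). d \<sigma> * tail_kernels n (Suc T) \<sigma> (merge_blk n \<beta> (w(Suc T := x))))
      = (\<Sum>b\<in>B0. \<Sum>\<sigma>\<in>PiE {n+1..T} (\<lambda>_. B0). d (\<sigma>(Suc T := b)) *
          tail_kernels n (Suc T) (\<sigma>(Suc T := b)) (merge_blk n \<beta> (w(Suc T := x))))"
    by (simp add: sum_PiE_insert)
  also have "\<dots> = (\<Sum>b\<in>B0. (\<Sum>\<sigma>\<in>PiE {n+1..T} (\<lambda>_. B0). d (\<sigma>(Suc T := b)) *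
        tail_kernels n T \<sigma> ?z) * v b x (history M (Suc T) ?z))"
    unfolding sum_distrib_right factor by (simp only: mult.assoc)
  finally show ?thesis .
qed

lemma separating_agreement_null:
  assumes "M \<le> n" "finite B0" "B0 \<subseteq> B" "separating n B0 \<beta>" "s < M"
  shows "(\<Union>b\<in>B0. \<Union>b'\<in>B0 - {b}.
            {w \<in> PiE {n+1..n+s} (\<lambda>_. UNIV). agree b b' (history M (Suc (n + s)) (merge_blk n \<beta> w))})
           \<in> null_sets (lborelP {n+1..n+s})"
proof (intro null_sets.finite_UN)
  fix b b' assume bb': "b \<in> B0" "b' \<in> B0 - {b}"
  have bB: "b \<in> B" "b' \<in> B" using bb' assms(3) by (simp_all add: subset_iff)
  have "b' \<in> B0" "b \<noteq> b'" "M - s \<in> {1..M}" using bb' assms(5) by auto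
  from separatingD[OF assms(4) bb'(1) this]
  have "{w \<in> PiE {n+1..n+s} (\<lambda>_. UNIV). agree b b' (history M (n + Suc s) (merge_blk n \<beta> w))}
      \<in> null_sets (lborelP {n+1..n+s})"
    by (rule history_agreement_null[OF assms(1,5) bB])
  then show "{w \<in> PiE {n+1..n+s} (\<lambda>_. UNIV). agree b b' (history M (Suc (n + s)) (merge_blk n \<beta> w))}
      \<in> null_sets (lborelP {n+1..n+s})"
    by simp
qed (use assms(2) in auto)

lemma last_coordinate_coeffs_zero:
  assumes "M \<le> n" "finite B0" "B0 \<subseteq> B"
    and distinct: "\<forall>b\<in>B0. \<forall>b'\<in>B0. b \<noteq> b' \<longrightarrow> \<not> agree b b' (history M (Suc (n + s)) (merge_blk n \<beta> w))"
    and S: "{x. w(Suc (n + s) := x) \<in> Z} \<in> sets lborel \<and> emeasure lborel {x. w(Suc (n + s) := x) \<in> Z} > 0"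
    and vanish: "\<forall>u\<in>Z. (\<Sum>\<sigma>\<in>PiE {n+1..Suc (n + s)} (\<lambda>_. B0).
        d \<sigma> * tail_kernels n (Suc (n + s)) \<sigma> (merge_blk n \<beta> u)) = 0"
  shows "\<forall>b\<in>B0. (\<Sum>\<sigma>\<in>PiE {n+1..n+s} (\<lambda>_. B0). d (\<sigma>(Suc (n + s) := b)) * tail_kernels n (n + s) \<sigma> (merge_blk n \<beta> w)) = 0"
proof (rule kernels_lin_indep_at[OF assms(2,3) history_PiE conjunct1[OF S] conjunct2[OF S] distinct])
  show "\<forall>x\<in>{x. w(Suc (n + s) := x) \<in> Z}. (\<Sum>b\<in>B0. (\<Sum>\<sigma>\<in>PiE {n+1..n+s} (\<lambda>_. B0).
      d (\<sigma>(Suc (n + s) := b)) * tail_kernels n (n + s) \<sigma> (merge_blk n \<beta> w))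
        * v b x (history M (Suc (n + s)) (merge_blk n \<beta> w))) = 0"
  proof
    fix x assume "x \<in> {x. w(Suc (n + s) := x) \<in> Z}"
    then have "(\<Sum>\<sigma>\<in>PiE {n+1..Suc (n + s)} (\<lambda>_. B0).
        d \<sigma> * tail_kernels n (Suc (n + s)) \<sigma> (merge_blk n \<beta> (w(Suc (n + s) := x)))) = 0"
      using vanish by simp
    then show "(\<Sum>b\<in>B0. (\<Sum>\<sigma>\<in>PiE {n+1..n+s} (\<lambda>_. B0).
        d (\<sigma>(Suc (n + s) := b)) * tail_kernels n (n + s) \<sigma> (merge_blk n \<beta> w))
          * v b x (history M (Suc (n + s)) (merge_blk n \<beta> w))) = 0"
      by (simp only: sum_tail_kernels_Suc[OF assms(1) le_add1])
  qed
qed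

lemma tail_kernels_coeffs_zero:
  assumes "M \<le> n" "finite B0" "B0 \<subseteq> B" "separating n B0 \<beta>" "s \<le> M"
    and "Z \<in> sets (lborelP {n+1..n+s})" "emeasure (lborelP {n+1..n+s}) Z > 0"
    and "\<forall>u\<in>Z. (\<Sum>\<sigma>\<in>PiE {n+1..n+s} (\<lambda>_. B0). d \<sigma> * tail_kernels n (n+s) \<sigma> (merge_blk n \<beta> u)) = 0"
  shows "\<forall>\<sigma>\<in>PiE {n+1..n+s} (\<lambda>_. B0). d \<sigma> = 0"
  using assms(5-8)
proof (induction s arbitrary: d Z)
  case 0
  then have "Z \<noteq> {}" by auto
  then obtain u where "u \<in> Z" by blast
  then show ?case
    using "0.prems"(4) by (auto simp: tail_kernels_def)
next
  case (Suc s)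
  define t W where "t = Suc (n + s)" and "W = {n+1..n+s}"
  have W: "finite W" "t \<notin> W" "{n+1..n + Suc s} = insert t W"
    by (auto simp: t_def W_def)
  obtain P where P: "P \<in> sets (lborelP W)" "emeasure (lborelP W) P > 0"
    and sections: "\<And>w. w \<in> P \<Longrightarrow> {x. w(t := x) \<in> Z} \<in> sets lborel \<and> emeasure lborel {x. w(t := x) \<in> Z} > 0"
    by (rule lborelP_positive_sections[OF W(1,2) Suc.prems(2,3)[unfolded W(3)]]) iprover
  define N where "N = (\<Union>b\<in>B0. \<Union>b'\<in>B0 - {b}.
      {w \<in> PiE W (\<lambda>_. UNIV). agree b b' (history M t (merge_blk n \<beta> w))})"
  have N: "N \<in> null_sets (lborelP W)"
    unfolding N_def t_def W_def using Suc.prems(1)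
    by (intro separating_agreement_null[OF assms(1-4)]) simp
  have section_coeffs: "(\<Sum>\<sigma>\<in>PiE W (\<lambda>_. B0). d (\<sigma>(t := b)) * tail_kernels n (n + s) \<sigma> (merge_blk n \<beta> w)) = 0"
    if w: "w \<in> P - N" and b: "b \<in> B0" for b w
  proof -
    have "w \<in> PiE W (\<lambda>_. UNIV)"
      using w sets.sets_into_space[OF P(1)] by (auto simp: space_PiM)
    then have "\<forall>b\<in>B0. \<forall>b'\<in>B0. b \<noteq> b' \<longrightarrow> \<not> agree b b' (history M t (merge_blk n \<beta> w))"
      using w by (auto simp: N_def)
    from last_coordinate_coeffs_zero[OF assms(1-3) this[unfolded t_def]] sections[OF DiffD1[OF w]]
    show ?thesis using Suc.prems(4) b by (simp add: t_def W_def)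
  qed
  have IH: "\<forall>\<sigma>\<in>PiE W (\<lambda>_. B0). d (\<sigma>(t := b)) = 0" if "b \<in> B0" for b
    unfolding W_def
  proof (rule Suc.IH)
    show "s \<le> M" using Suc.prems(1) by simp
    show "P - N \<in> sets (lborelP {n+1..n+s})" using P(1) N by (auto simp: W_def)
    show "emeasure (lborelP {n+1..n+s}) (P - N) > 0"
      using P emeasure_Diff_null_set[OF N P(1)] by (simp add: W_def)
    show "\<forall>u\<in>P - N. (\<Sum>\<sigma>\<in>PiE {n+1..n+s} (\<lambda>_. B0). d (\<sigma>(t := b)) *
        tail_kernels n (n + s) \<sigma> (merge_blk n \<beta> u)) = 0"
      using section_coeffs that by (simp add: W_def)
  qed
  show ?case
  proof
    fix \<sigma> assume "\<sigma> \<in> PiE {n+1..n + Suc s} (\<lambda>_. B0)"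
    then have "\<sigma>(t := undefined) \<in> PiE W (\<lambda>_. B0)" "\<sigma> t \<in> B0"
      using W by (auto simp: PiE_iff extensional_def)
    then have "d ((\<sigma>(t := undefined))(t := \<sigma> t)) = 0"
      using IH by blast
    then show "d \<sigma> = 0" by simp
  qed
qed

lemma traj_merge_blk:
  assumes "M \<le> n" "n \<le> T"
  shows "traj M T pa (\<lambda>t. v (merge_blk n \<sigma>1 \<sigma>2 t)) (merge_blk n \<beta> u)
       = traj M n pa (\<lambda>t. v (\<sigma>1 t)) \<beta> * tail_kernels n T \<sigma>2 (merge_blk n \<beta> u)"
proof -
  let ?z = "merge_blk n \<beta> u"
  have split: "{M+1..T} = {M+1..n} \<union> {n+1..T}" "{M+1..n} \<inter> {n+1..T} = {}"
    using assms by auto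
  have "restrict ?z {1..M} = restrict \<beta> {1..M}"
    using assms by (auto simp: merge_blk_def)
  moreover have "(\<Prod>t\<in>{M+1..n}. v (merge_blk n \<sigma>1 \<sigma>2 t) (?z t) (history M t ?z))
      = (\<Prod>t\<in>{M+1..n}. v (\<sigma>1 t) (\<beta> t) (history M t \<beta>))"
  proof (intro prod.cong refl)
    fix t assume t: "t \<in> {M+1..n}"
    then have "history M t ?z = history M t \<beta>"
      by (intro history_merge_blk_low) auto
    moreover have "merge_blk n \<sigma>1 \<sigma>2 t = \<sigma>1 t" "?z t = \<beta> t"
      using t by (simp_all add: merge_blk_def)
    ultimately show "v (merge_blk n \<sigma>1 \<sigma>2 t) (?z t) (history M t ?z) = v (\<sigma>1 t) (\<beta> t) (history M t \<beta>)"
      by simp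
  qed
  moreover have "(\<Prod>t\<in>{n+1..T}. v (merge_blk n \<sigma>1 \<sigma>2 t) (?z t) (history M t ?z))
      = tail_kernels n T \<sigma>2 ?z"
    unfolding tail_kernels_def by (intro prod.cong refl) (simp add: merge_blk_def)
  ultimately show ?thesis
    unfolding traj_eq_history split prod.union_disjoint[OF finite_atLeastAtMost finite_atLeastAtMost split(2)]
    by (simp add: mult.assoc)
qed

definition traj_mixture :: "nat \<Rightarrow> ('a \<Rightarrow> (nat \<Rightarrow> 'x) \<Rightarrow> real) \<Rightarrow> 'a set \<Rightarrow> 'b set \<Rightarrow>
    ('a \<Rightarrow> (nat \<Rightarrow> 'b) \<Rightarrow> real) \<Rightarrow> (nat \<Rightarrow> 'x) \<Rightarrow> real" where
  "traj_mixture T p A0 B0 c z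
     = (\<Sum>a\<in>A0. \<Sum>\<sigma>\<in>PiE {M+1..T} (\<lambda>_. B0). c a \<sigma> * traj M T (p a) (\<lambda>t. v (\<sigma> t)) z)"

lemma traj_mixture_self:
  "\<beta> \<in> PiE {1..M} (\<lambda>_. UNIV) \<Longrightarrow> traj_mixture M p A0 B0 c \<beta> = (\<Sum>a\<in>A0. c a (\<lambda>_. undefined) * p a \<beta>)"
  by (simp add: traj_mixture_def traj_self)

lemma traj_mixture_merge_blk:
  assumes "M \<le> n" "n \<le> T"
  shows "traj_mixture T p A0 B0 c (merge_blk n \<beta> u)
       = (\<Sum>\<sigma>2\<in>PiE {n+1..T} (\<lambda>_. B0).
            traj_mixture n p A0 B0 (\<lambda>a \<sigma>1. c a (merge_blk n \<sigma>1 \<sigma>2)) \<beta> * tail_kernels n T \<sigma>2 (merge_blk n \<beta> u))"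
proof -
  have split: "(\<Sum>\<sigma>\<in>PiE {M+1..T} (\<lambda>_. B0). f \<sigma>)
      = (\<Sum>\<sigma>1\<in>PiE {M+1..n} (\<lambda>_. B0). \<Sum>\<sigma>2\<in>PiE {n+1..T} (\<lambda>_. B0). f (merge_blk n \<sigma>1 \<sigma>2))"
    for f :: "(nat \<Rightarrow> 'b) \<Rightarrow> real"
    by (rule sum_PiE_merge_blk) (use assms in auto)
  have "traj_mixture T p A0 B0 c (merge_blk n \<beta> u)
      = (\<Sum>a\<in>A0. \<Sum>\<sigma>1\<in>PiE {M+1..n} (\<lambda>_. B0). \<Sum>\<sigma>2\<in>PiE {n+1..T} (\<lambda>_. B0).
          c a (merge_blk n \<sigma>1 \<sigma>2) * (traj M n (p a) (\<lambda>t. v (\<sigma>1 t)) \<beta> * tail_kernels n T \<sigma>2 (merge_blk n \<beta> u)))"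
    unfolding traj_mixture_def split by (simp add: traj_merge_blk[OF assms])
  also have "\<dots> = (\<Sum>\<sigma>2\<in>PiE {n+1..T} (\<lambda>_. B0). \<Sum>a\<in>A0. \<Sum>\<sigma>1\<in>PiE {M+1..n} (\<lambda>_. B0).
          c a (merge_blk n \<sigma>1 \<sigma>2) * (traj M n (p a) (\<lambda>t. v (\<sigma>1 t)) \<beta> * tail_kernels n T \<sigma>2 (merge_blk n \<beta> u)))"
    by (subst sum.swap) (simp only: sum.swap[of _ "PiE {M+1..n} (\<lambda>_. B0)"])
  also have "\<dots> = (\<Sum>\<sigma>2\<in>PiE {n+1..T} (\<lambda>_. B0).
      traj_mixture n p A0 B0 (\<lambda>a \<sigma>1. c a (merge_blk n \<sigma>1 \<sigma>2)) \<beta> * tail_kernels n T \<sigma>2 (merge_blk n \<beta> u))"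
    by (simp add: traj_mixture_def sum_distrib_right mult.assoc)
  finally show ?thesis .
qed

lemma traj_mixture_head_vanishes:
  assumes "M \<le> n" "s \<le> M" "finite B0" "B0 \<subseteq> B"
    and Z: "Z \<in> sets (lborelP {n+1..n+s})" "emeasure (lborelP {n+1..n+s}) Z > 0"
    and vanish: "\<forall>z\<in>PiE {1..n+s} (\<lambda>_. UNIV). restrict z {n+1..n+s} \<in> Z \<longrightarrow> traj_mixture (n+s) p A0 B0 c z = 0"
    and \<beta>: "\<beta> \<in> PiE {1..n} (\<lambda>_. UNIV)" "separating n B0 \<beta>"
    and \<sigma>2: "\<sigma>2 \<in> PiE {n+1..n+s} (\<lambda>_. B0)"
  shows "traj_mixture n p A0 B0 (\<lambda>a \<sigma>1. c a (merge_blk n \<sigma>1 \<sigma>2)) \<beta> = 0"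
proof -
  have "\<forall>\<sigma>2\<in>PiE {n+1..n+s} (\<lambda>_. B0). traj_mixture n p A0 B0 (\<lambda>a \<sigma>1. c a (merge_blk n \<sigma>1 \<sigma>2)) \<beta> = 0"
  proof (rule tail_kernels_coeffs_zero[OF assms(1,3,4) \<beta>(2) assms(2) Z])
    show "\<forall>u\<in>Z. (\<Sum>\<sigma>2\<in>PiE {n+1..n+s} (\<lambda>_. B0). traj_mixture n p A0 B0 (\<lambda>a \<sigma>1. c a (merge_blk n \<sigma>1 \<sigma>2)) \<beta> *
        tail_kernels n (n+s) \<sigma>2 (merge_blk n \<beta> u)) = 0"
    proof
      fix u assume u: "u \<in> Z"
      then have u_PiE: "u \<in> PiE {n+1..n+s} (\<lambda>_. UNIV)"
        using sets.sets_into_space[OF Z(1)] by (auto simp: space_PiM)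
      have "merge_blk n \<beta> u \<in> PiE {1..n+s} (\<lambda>_. UNIV)"
        by (rule merge_blk_PiE[OF \<beta>(1) u_PiE]) auto
      moreover have "restrict (merge_blk n \<beta> u) {n+1..n+s} = u"
        by (rule restrict_merge_blk_high[OF u_PiE])
      ultimately have "traj_mixture (n+s) p A0 B0 c (merge_blk n \<beta> u) = 0"
        using vanish u by simp
      then show "(\<Sum>\<sigma>2\<in>PiE {n+1..n+s} (\<lambda>_. B0). traj_mixture n p A0 B0 (\<lambda>a \<sigma>1. c a (merge_blk n \<sigma>1 \<sigma>2)) \<beta> *
          tail_kernels n (n+s) \<sigma>2 (merge_blk n \<beta> u)) = 0"
        by (simp add: traj_mixture_merge_blk[OF assms(1)])
    qed
  qed
  then show ?thesis using \<sigma>2 by blast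
qed

text \<open>One step of the induction over blocks: \<open>heads\<close> is the induction hypothesis for the
  first \<open>n\<close> coordinates.\<close>
lemma traj_mixture_coeffs_zero_from_heads:
  assumes "M \<le> n" "s \<le> M" "finite B0" "B0 \<subseteq> B"
    and Z: "Z \<in> sets (lborelP {n+1..n+s})" "emeasure (lborelP {n+1..n+s}) Z > 0"
    and vanish: "\<forall>z\<in>PiE {1..n+s} (\<lambda>_. UNIV). restrict z {n+1..n+s} \<in> Z \<longrightarrow> traj_mixture (n+s) p A0 B0 c z = 0"
    and heads: "\<And>c'. \<forall>\<beta>\<in>PiE {1..n} (\<lambda>_. UNIV).
        restrict \<beta> {n-M+1..n} \<in> {y \<in> PiE {n-M+1..n} (\<lambda>_. UNIV). separating n B0 y} \<longrightarrow>
        traj_mixture n p A0 B0 c' \<beta> = 0 \<Longrightarrow>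
      \<forall>a\<in>A0. \<forall>\<sigma>1\<in>PiE {M+1..n} (\<lambda>_. B0). c' a \<sigma>1 = 0"
  shows "\<forall>a\<in>A0. \<forall>\<sigma>\<in>PiE {M+1..n+s} (\<lambda>_. B0). c a \<sigma> = 0"
proof (intro ballI)
  fix a \<sigma> assume a: "a \<in> A0" and \<sigma>: "\<sigma> \<in> PiE {M+1..n+s} (\<lambda>_. B0)"
  define \<sigma>1 \<sigma>2 where "\<sigma>1 = restrict \<sigma> {M+1..n}" and "\<sigma>2 = restrict \<sigma> {n+1..n+s}"
  have \<sigma>2: "\<sigma>2 \<in> PiE {n+1..n+s} (\<lambda>_. B0)" and \<sigma>1: "\<sigma>1 \<in> PiE {M+1..n} (\<lambda>_. B0)"
    using \<sigma> assms(1) by (auto simp: \<sigma>1_def \<sigma>2_def PiE_iff)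
  have "\<forall>a\<in>A0. \<forall>\<sigma>1\<in>PiE {M+1..n} (\<lambda>_. B0). c a (merge_blk n \<sigma>1 \<sigma>2) = 0"
  proof (rule heads, intro ballI impI)
    fix \<beta> assume \<beta>: "\<beta> \<in> PiE {1..n} (\<lambda>_. UNIV)"
      "restrict \<beta> {n-M+1..n} \<in> {y \<in> PiE {n-M+1..n} (\<lambda>_. UNIV). separating n B0 y}"
    then have "separating n B0 \<beta>"
      using separating_restrict[OF assms(1)] by simp
    with \<beta>(1) show "traj_mixture n p A0 B0 (\<lambda>a \<sigma>1. c a (merge_blk n \<sigma>1 \<sigma>2)) \<beta> = 0"
      by (rule traj_mixture_head_vanishes[OF assms(1-4) Z vanish _ _ \<sigma>2])
  qed
  moreover have "merge_blk n \<sigma>1 \<sigma>2 = \<sigma>"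
    unfolding \<sigma>1_def \<sigma>2_def using \<sigma> assms(1) by (intro merge_blk_restrict) auto
  ultimately show "c a \<sigma> = 0" using a \<sigma>1 by metis
qed

end

section \<open>Separating histories and the induction on blocks\<close>

locale lagged_kernels_indep = lagged_kernels M B v
  for M :: nat and B :: "'b set" and v :: "'b \<Rightarrow> 'x::euclidean_space \<Rightarrow> (nat \<Rightarrow> 'x) \<Rightarrow> real" +
  assumes b4: "\<exists>Y. full_meas (Leb {1..M}) Y \<and>
               (\<forall>Y' Z. Y' \<subseteq> Y \<longrightarrow> pos_meas (Leb {1..M}) Y' \<longrightarrow> pos_meas lebesgue Z \<longrightarrow>
                  lin_indep_fm
                    ((\<lambda>b. restrict (\<lambda>(z, y). v b z y) (UNIV \<times> PiE {1..M} (\<lambda>_. UNIV))) ` B)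
                    (Z \<times> Y'))"
begin

definition kernel :: "'b \<Rightarrow> 'x \<times> (nat \<Rightarrow> 'x) \<Rightarrow> real" where
  "kernel b = restrict (\<lambda>(z, y). v b z y) (UNIV \<times> PiE {1..M} (\<lambda>_. UNIV))"

lemma agreement_set_null:
  assumes "b \<in> B" "b' \<in> B" "kernel b \<noteq> kernel b'"
  shows "{y \<in> PiE {1..M} (\<lambda>_. UNIV). agree b b' y} \<in> null_sets (lborelP {1..M})"
    (is "?H \<in> _")
proof -
  have "{y \<in> PiE {1..M} (\<lambda>_. UNIV). \<forall>u\<in>{()}. agree b b' y} \<in> sets (lborelP {1..M})"
    by (rule sets_lborelP_agree[OF assms(1,2)]) (auto intro: continuous_on_id)
  then have H: "?H \<in> sets (lborelP {1..M})" by simp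
  have "(\<lambda>b. restrict (\<lambda>(z, y). v b z y) (UNIV \<times> PiE {1..M} (\<lambda>_. UNIV))) = kernel"
    by (rule ext) (simp add: kernel_def)
  from b4[unfolded this] obtain Y where Y: "full_meas (Leb {1..M}) Y"
    and indep: "\<forall>Y' Z. Y' \<subseteq> Y \<longrightarrow> pos_meas (Leb {1..M}) Y' \<longrightarrow> pos_meas lebesgue Z \<longrightarrow>
        lin_indep_fm (kernel ` B) (Z \<times> Y')"
    by blast
  have "\<not> emeasure (lborelP {1..M}) ?H > 0"
  proof
    assume "emeasure (lborelP {1..M}) ?H > 0"
    from indep[rule_format, OF Int_lower2 pos_meas_Leb_Int_full_meas[OF Y H this] pos_meas_lebesgue_UNIV]
    have "\<forall>x\<in>{b, b'}. (if x = b then 1 else -1 :: real) = 0"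
    proof (rule lin_indep_fm_imageD)
      show "{b, b'} \<subseteq> B" "finite {b, b'}" "inj_on kernel {b, b'}"
        using assms by auto
      have "b \<noteq> b'" using assms(3) by auto
      have "kernel b p = kernel b' p" if "p \<in> UNIV \<times> (?H \<inter> Y)" for p
        using that by (auto simp: kernel_def agree_def)
      with \<open>b \<noteq> b'\<close>
      show "\<forall>p\<in>UNIV \<times> (?H \<inter> Y). (\<Sum>x\<in>{b, b'}. (if x = b then 1 else -1) * kernel x p) = 0"
        by simp
    qed
    then show False by simp
  qed
  then show ?thesis
    using H by (simp add: null_sets_def)
qed

lemma coincidence_set_null:
  assumes "b \<in> B" "b' \<in> B" "kernel b \<noteq> kernel b'" "l \<le> M"
  shows "{u \<in> PiE {1..l} (\<lambda>_. UNIV). coincide l u b b'} \<in> null_sets (lborelP {1..l})"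
    (is "?K \<in> _")
proof -
  have "{u \<in> PiE {1..l} (\<lambda>_. UNIV). \<forall>y\<in>PiE {l+1..M} (\<lambda>_. UNIV). agree b b' (merge_blk l u y)}
      \<in> sets (lborelP {1..l})"
  proof (rule sets_lborelP_agree[OF assms(1,2)])
    fix y :: "nat \<Rightarrow> 'x" assume y: "y \<in> PiE {l+1..M} (\<lambda>_. UNIV)"
    show "continuous_on (PiE {1..l} (\<lambda>_. UNIV)) (\<lambda>u. merge_blk l u y)"
      by (rule continuous_on_merge_blk)
    show "(\<lambda>u. merge_blk l u y) \<in> PiE {1..l} (\<lambda>_. UNIV) \<rightarrow> PiE {1..M} (\<lambda>_. UNIV)"
    proof
      fix u :: "nat \<Rightarrow> 'x" assume "u \<in> PiE {1..l} (\<lambda>_. UNIV)"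
      then show "merge_blk l u y \<in> PiE {1..M} (\<lambda>_. UNIV)"
        using y by (rule merge_blk_PiE) (simp_all add: assms(4))
    qed
  qed
  then have K: "?K \<in> sets (lborelP {1..l})"
    by (simp add: coincide_def)
  have split: "{1..l} \<inter> {l+1..M} = {}" "{1..l} \<union> {l+1..M} = {1..M}"
    using assms(4) by auto
  let ?C = "{y \<in> PiE {1..M} (\<lambda>_. UNIV). restrict y {1..l} \<in> ?K}"
  have "?C \<subseteq> {y \<in> PiE {1..M} (\<lambda>_. UNIV). agree b b' y}"
  proof (intro subsetI CollectI conjI)
    fix y assume "y \<in> ?C"
    then have y: "y \<in> PiE {1..M} (\<lambda>_. UNIV)" "coincide l (restrict y {1..l}) b b'"
      by auto
    then have "agree b b' (merge_blk l (restrict y {1..l}) (restrict y {l+1..M}))"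
      by (simp add: coincide_def)
    moreover have "merge_blk l (restrict y {1..l}) (restrict y {l+1..M}) = y"
      using y(1) assms(4) by (intro merge_blk_restrict) auto
    ultimately show "agree b b' y" by simp
    show "y \<in> PiE {1..M} (\<lambda>_. UNIV)" by (fact y(1))
  qed
  moreover have "?C \<in> sets (lborelP {1..M})"
    using K by (rule sets_lborelP_cylinder[rotated]) (use assms(4) in auto)
  ultimately have "?C \<in> null_sets (lborelP {1..M})"
    using agreement_set_null[OF assms(1-3)] by (blast intro: null_sets_subset)
  then show ?thesis
    using null_sets_lborelP_cylinder_iff[OF split(1) _ _ K, unfolded split(2)] by simp
qed

lemma window_coincidence_null:
  assumes "b \<in> B" "b' \<in> B" "kernel b \<noteq> kernel b'" "l \<le> M" "M \<le> n"
  shows "{y \<in> PiE {n-M+1..n} (\<lambda>_. UNIV). coincide l (\<lambda>j\<in>{1..l}. y (n - l + j)) b b'}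
           \<in> null_sets (lborelP {n-M+1..n})"
proof -
  let ?K = "{u \<in> PiE {1..l} (\<lambda>_. UNIV). coincide l u b b'}"
    and ?h = "\<lambda>u. \<lambda>j\<in>{1..l}. u (n - l + j)" and ?I = "{n-l+1..n}"
  have K: "?K \<in> null_sets (lborelP {1..l})"
    using coincidence_set_null[OF assms(1-4)] .
  have bij: "bij_betw (\<lambda>j. n - l + j) {1..l} ?I"
    by (rule bij_betw_byWitness[where f'="\<lambda>i. i - (n - l)"]) (use assms(4,5) in auto)
  define K' where "K' = ?h -` ?K \<inter> space (lborelP ?I)"
  have "K' \<in> sets (lborelP ?I)"
    unfolding K'_def using bij K
    by (intro measurable_sets[OF measurable_lborelP_reindex]) (auto simp: bij_betw_def)
  moreover have "emeasure (lborelP ?I) K' = 0"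
    unfolding K'_def using emeasure_lborelP_reindex[OF finite_atLeastAtMost bij null_setsD2[OF K]] K
    by (simp add: null_sets_def)
  ultimately have K': "K' \<in> null_sets (lborelP ?I)" by (intro null_setsI)
  have split: "?I \<inter> {n-M+1..n-l} = {}" "?I \<union> {n-M+1..n-l} = {n-M+1..n}"
    using assms(4,5) by auto
  have "{y \<in> PiE (?I \<union> {n-M+1..n-l}) (\<lambda>_. UNIV). restrict y ?I \<in> K'} \<in> null_sets (lborelP (?I \<union> {n-M+1..n-l}))"
    using null_sets_lborelP_cylinder_iff[OF split(1) _ _ null_setsD2[OF K']] K' by simp
  moreover have "?h (restrict y ?I) = (\<lambda>j\<in>{1..l}. y (n - l + j))" for y :: "nat \<Rightarrow> 'x"
    using assms(4,5) by (auto simp: fun_eq_iff)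
  ultimately show ?thesis
    unfolding split(2) by (simp add: K'_def space_PiM)
qed

lemma separating_windows_pos_measure:
  assumes "M \<le> n" "finite B0" "B0 \<subseteq> B" "inj_on kernel B0"
  shows "{y \<in> PiE {n-M+1..n} (\<lambda>_. UNIV). separating n B0 y} \<in> sets (lborelP {n-M+1..n})"
    and "emeasure (lborelP {n-M+1..n}) {y \<in> PiE {n-M+1..n} (\<lambda>_. UNIV). separating n B0 y} > 0"
proof -
  let ?I = "{n-M+1..n}"
  define N where "N = (\<Union>b\<in>B0. \<Union>b'\<in>B0 - {b}. \<Union>l\<in>{1..M}.
      {y \<in> PiE ?I (\<lambda>_. UNIV). coincide l (\<lambda>j\<in>{1..l}. y (n - l + j)) b b'})"
  have N: "N \<in> null_sets (lborelP ?I)"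
    unfolding N_def
  proof (intro null_sets.finite_UN)
    fix b b' l assume "b \<in> B0" "b' \<in> B0 - {b}" "l \<in> {1..M}"
    then show "{y \<in> PiE ?I (\<lambda>_. UNIV). coincide l (\<lambda>j\<in>{1..l}. y (n - l + j)) b b'} \<in> null_sets (lborelP ?I)"
      using assms inj_onD[OF assms(4)] by (intro window_coincidence_null) auto
  qed (use assms(2) in auto)
  have G: "{y \<in> PiE ?I (\<lambda>_. UNIV). separating n B0 y} = space (lborelP ?I) - N"
  proof (intro set_eqI iffI)
    fix y assume "y \<in> {y \<in> PiE ?I (\<lambda>_. UNIV). separating n B0 y}"
    then show "y \<in> space (lborelP ?I) - N"
      unfolding N_def by (auto simp: space_PiM dest: separatingD)
  next
    fix y assume "y \<in> space (lborelP ?I) - N"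
    then show "y \<in> {y \<in> PiE ?I (\<lambda>_. UNIV). separating n B0 y}"
      by (auto simp: N_def separating_def space_PiM)
  qed
  then show "{y \<in> PiE ?I (\<lambda>_. UNIV). separating n B0 y} \<in> sets (lborelP ?I)"
    using N by auto
  have "emeasure (lborelP ?I) (space (lborelP ?I) - N) = emeasure (lborelP ?I) (PiE ?I (\<lambda>_. UNIV) :: (nat \<Rightarrow> 'x) set)"
    using emeasure_Diff_null_set[OF N] by (simp add: space_PiM)
  also have "\<dots> = \<infinity>"
    using M_pos assms(1) emeasure_lborelP_space[of ?I, where 'x='x] by simp
  finally show "emeasure (lborelP ?I) {y \<in> PiE ?I (\<lambda>_. UNIV). separating n B0 y} > 0"
    unfolding G by simp
qed

lemma traj_mixture_coeffs_zero:
  fixes p :: "'a \<Rightarrow> (nat \<Rightarrow> 'x) \<Rightarrow> real"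
  assumes c1: "\<forall>Y. pos_meas (Leb {1..M}) Y \<longrightarrow>
      lin_indep_fm ((\<lambda>a. restrict (p a) (PiE {1..M} (\<lambda>_. UNIV))) ` A) Y"
    and A0: "finite A0" "A0 \<subseteq> A" "inj_on (\<lambda>a. restrict (p a) (PiE {1..M} (\<lambda>_. UNIV))) A0"
    and B0: "finite B0" "B0 \<subseteq> B" "inj_on kernel B0"
    and "1 \<le> k" "s \<le> M"
    and "Z \<in> sets (lborelP {k*M+1..k*M+s})" "emeasure (lborelP {k*M+1..k*M+s}) Z > 0"
    and "\<forall>z\<in>PiE {1..k*M+s} (\<lambda>_. UNIV). restrict z {k*M+1..k*M+s} \<in> Z \<longrightarrow>
           traj_mixture (k*M+s) p A0 B0 c z = 0"
  shows "\<forall>a\<in>A0. \<forall>\<sigma>\<in>PiE {M+1..k*M+s} (\<lambda>_. B0). c a \<sigma> = 0"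
  using assms(8-)
proof (induction k arbitrary: s Z c rule: nat_induct_at_least)
  case base
  let ?G = "{\<beta> \<in> PiE {1..M} (\<lambda>_. UNIV). separating M B0 \<beta>}"
  have G: "?G \<in> sets (lborelP {1..M})" "emeasure (lborelP {1..M}) ?G > 0"
    using separating_windows_pos_measure[OF order.refl B0] by simp_all
  have "\<forall>a\<in>A0. \<forall>\<sigma>\<in>PiE {M+1..M+s} (\<lambda>_. B0). c a \<sigma> = 0"
  proof (rule traj_mixture_coeffs_zero_from_heads[OF order.refl base.prems(1) B0(1,2)
        base.prems(2-4)[unfolded mult_1]])
    fix c' assume "\<forall>\<beta>\<in>PiE {1..M} (\<lambda>_. UNIV).
        restrict \<beta> {M-M+1..M} \<in> {y \<in> PiE {M-M+1..M} (\<lambda>_. UNIV). separating M B0 y} \<longrightarrow>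
        traj_mixture M p A0 B0 c' \<beta> = 0"
    then have "\<forall>\<beta>\<in>?G. (\<Sum>a\<in>A0. c' a (\<lambda>_. undefined) * restrict (p a) (PiE {1..M} (\<lambda>_. UNIV)) \<beta>) = 0"
      by (simp add: traj_mixture_self PiE_restrict)
    from lin_indep_fm_imageD[OF c1[rule_format, OF pos_meas_LebI[OF G]] A0(2,1,3) this]
    show "\<forall>a\<in>A0. \<forall>\<sigma>1\<in>PiE {M+1..M} (\<lambda>_. B0). c' a \<sigma>1 = 0"
      by simp
  qed
  then show ?case by simp
next
  case (Suc k)
  define n where "n = k * M + M"
  have n: "M \<le> n" "n - M = k * M" "Suc k * M = n" by (simp_all add: n_def)
  have "\<forall>a\<in>A0. \<forall>\<sigma>\<in>PiE {M+1..n+s} (\<lambda>_. B0). c a \<sigma> = 0"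
  proof (rule traj_mixture_coeffs_zero_from_heads[OF n(1) Suc.prems(1) B0(1,2)
        Suc.prems(2-4)[unfolded n(3)]])
    fix c' assume heads: "\<forall>\<beta>\<in>PiE {1..n} (\<lambda>_. UNIV).
        restrict \<beta> {n-M+1..n} \<in> {y \<in> PiE {n-M+1..n} (\<lambda>_. UNIV). separating n B0 y} \<longrightarrow>
        traj_mixture n p A0 B0 c' \<beta> = 0"
    let ?G = "{y \<in> PiE {k*M+1..k*M+M} (\<lambda>_. UNIV). separating n B0 y}"
    have G: "?G \<in> sets (lborelP {k*M+1..k*M+M})" "emeasure (lborelP {k*M+1..k*M+M}) ?G > 0"
      using separating_windows_pos_measure[OF n(1) B0] unfolding n(2) by (simp_all only: n_def)
    have "\<forall>z\<in>PiE {1..k*M+M} (\<lambda>_. UNIV). restrict z {k*M+1..k*M+M} \<in> ?G \<longrightarrow>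
        traj_mixture (k*M+M) p A0 B0 c' z = 0"
      using heads unfolding n(2) by (simp only: n_def)
    from Suc.IH[OF order.refl G this]
    show "\<forall>a\<in>A0. \<forall>\<sigma>1\<in>PiE {M+1..n} (\<lambda>_. B0). c' a \<sigma>1 = 0"
      by (simp only: n_def)
  qed
  then show ?case by (simp only: n(3))
qed

lemma traj_cong_kernel:
  assumes "restrict (p a) (PiE {1..M} (\<lambda>_. UNIV)) = restrict (p a') (PiE {1..M} (\<lambda>_. UNIV))"
    and "\<forall>t\<in>{M+1..T}. kernel (bs t) = kernel (bs' t)"
  shows "traj M T (p a) (\<lambda>t. v (bs t)) z = traj M T (p a') (\<lambda>t. v (bs' t)) z"
proof -
  have "p a (restrict z {1..M}) = p a' (restrict z {1..M})"
    using fun_cong[OF assms(1), of "restrict z {1..M}"] by simp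
  moreover have "v (bs t) (z t) (history M t z) = v (bs' t) (z t) (history M t z)" if "t \<in> {M+1..T}" for t
    using fun_cong[OF bspec[OF assms(2) that], of "(z t, history M t z)"] history_PiE[of M t z]
    by (simp add: kernel_def)
  ultimately show ?thesis
    unfolding traj_eq_history by (metis (no_types, lifting) prod.cong)
qed

lemma traj_family_representatives:
  assumes "A' \<subseteq> A" "(\<lambda>a. restrict (p a) (PiE {1..M} (\<lambda>_. UNIV))) ` A' = (\<lambda>a. restrict (p a) (PiE {1..M} (\<lambda>_. UNIV))) ` A"
    and "B' \<subseteq> B" "kernel ` B' = kernel ` B"
  shows "(\<lambda>(a, bs). restrict (traj M T (p a) (\<lambda>t. v (bs t))) (PiE {1..T} (\<lambda>_. UNIV)))
            ` (A \<times> {bs. \<forall>t\<in>{M+1..T}. bs t \<in> B})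
       = (\<lambda>(a, bs). restrict (traj M T (p a) (\<lambda>t. v (bs t))) (PiE {1..T} (\<lambda>_. UNIV)))
            ` (A' \<times> PiE {M+1..T} (\<lambda>_. B'))"
    (is "?\<phi> ` _ = _")
proof
  show "?\<phi> ` (A' \<times> PiE {M+1..T} (\<lambda>_. B')) \<subseteq> ?\<phi> ` (A \<times> {bs. \<forall>t\<in>{M+1..T}. bs t \<in> B})"
  proof (intro image_mono Sigma_mono)
    show "PiE {M+1..T} (\<lambda>_. B') \<subseteq> {bs. \<forall>t\<in>{M+1..T}. bs t \<in> B}"
      using assms(3) by (auto simp: PiE_iff)
  qed (rule assms(1))
next
  let ?P = "\<lambda>a. restrict (p a) (PiE {1..M} (\<lambda>_. UNIV))"
  show "?\<phi> ` (A \<times> {bs. \<forall>t\<in>{M+1..T}. bs t \<in> B}) \<subseteq> ?\<phi> ` (A' \<times> PiE {M+1..T} (\<lambda>_. B'))"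
  proof (rule image_subsetI)
    fix x assume "x \<in> A \<times> {bs. \<forall>t\<in>{M+1..T}. bs t \<in> B}"
    then obtain a bs where x: "x = (a, bs)" and a: "a \<in> A" and bs: "\<forall>t\<in>{M+1..T}. bs t \<in> B"
      by (cases x) simp
    have "?P a \<in> ?P ` A'"
      unfolding assms(2) using a by (rule imageI)
    then obtain a' where a': "?P a = ?P a'" "a' \<in> A'"
      by (rule imageE)
    define \<sigma> where "\<sigma> = (\<lambda>t\<in>{M+1..T}. inv_into B' kernel (kernel (bs t)))"
    have "kernel (bs t) \<in> kernel ` B'" if "t \<in> {M+1..T}" for t
      using bs that assms(4) by auto
    then have \<sigma>: "\<sigma> \<in> PiE {M+1..T} (\<lambda>_. B')" "\<forall>t\<in>{M+1..T}. kernel (bs t) = kernel (\<sigma> t)"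
      by (auto simp: \<sigma>_def inv_into_into f_inv_into_f)
    have "?\<phi> (a, bs) = ?\<phi> (a', \<sigma>)"
      using traj_cong_kernel[OF a'(1) \<sigma>(2)] by auto
    then show "?\<phi> x \<in> ?\<phi> ` (A' \<times> PiE {M+1..T} (\<lambda>_. B'))"
      unfolding x using a'(2) \<sigma>(1) by (intro image_eqI[where x="(a', \<sigma>)"]) simp_all
  qed
qed

lemma traj_family_lin_indep_inj:
  fixes p :: "'a \<Rightarrow> (nat \<Rightarrow> 'x) \<Rightarrow> real"
  assumes c1: "\<forall>Y. pos_meas (Leb {1..M}) Y \<longrightarrow>
      lin_indep_fm ((\<lambda>a. restrict (p a) (PiE {1..M} (\<lambda>_. UNIV))) ` A) Y"
    and A': "A' \<subseteq> A" "inj_on (\<lambda>a. restrict (p a) (PiE {1..M} (\<lambda>_. UNIV))) A'"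
    and B': "B' \<subseteq> B" "inj_on kernel B'"
    and "1 \<le> k" "s \<le> M"
    and Z: "Z \<in> sets (lborelP {k*M+1..k*M+s})" "emeasure (lborelP {k*M+1..k*M+s}) Z > 0"
  shows "lin_indep_fm
           ((\<lambda>(a, bs). restrict (traj M (k*M+s) (p a) (\<lambda>t. v (bs t))) (PiE {1..k*M+s} (\<lambda>_. UNIV)))
              ` (A' \<times> PiE {M+1..k*M+s} (\<lambda>_. B')))
           {z \<in> PiE {1..k*M+s} (\<lambda>_. UNIV). restrict z {k*M+1..k*M+s} \<in> Z}"
    (is "lin_indep_fm (?\<phi> ` _) ?D")
proof (rule lin_indep_fm_imageI)
  let ?T = "k*M+s"
  fix X0 c assume X0: "X0 \<subseteq> A' \<times> PiE {M+1..?T} (\<lambda>_. B')" "finite X0"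
    and vanish: "\<forall>z\<in>?D. (\<Sum>x\<in>X0. c x * ?\<phi> x z) = 0"
  define A0 B0 where "A0 = fst ` X0" and "B0 = (\<Union>x\<in>X0. snd x ` {M+1..?T})"
  define C where "C a \<sigma> = (if (a, \<sigma>) \<in> X0 then c (a, \<sigma>) else 0)" for a \<sigma>
  have "A0 \<subseteq> A'"
    using X0(1) by (auto simp: A0_def)
  then have A0: "finite A0" "A0 \<subseteq> A" "inj_on (\<lambda>a. restrict (p a) (PiE {1..M} (\<lambda>_. UNIV))) A0"
    using X0(2) A' by (auto simp: A0_def intro: inj_on_subset)
  have "B0 \<subseteq> B'"
    using X0(1) by (force simp: B0_def PiE_iff)
  then have B0: "finite B0" "B0 \<subseteq> B" "inj_on kernel B0"
    using X0(2) B' by (auto simp: B0_def intro: inj_on_subset)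
  have X0_sub: "X0 \<subseteq> A0 \<times> PiE {M+1..?T} (\<lambda>_. B0)"
    using X0(1) by (force simp: A0_def B0_def PiE_iff)
  have "traj_mixture ?T p A0 B0 C z = 0" if "z \<in> ?D" for z
  proof -
    have "traj_mixture ?T p A0 B0 C z
        = (\<Sum>x\<in>A0 \<times> PiE {M+1..?T} (\<lambda>_. B0). C (fst x) (snd x) * traj M ?T (p (fst x)) (\<lambda>t. v (snd x t)) z)"
      by (simp add: traj_mixture_def sum.cartesian_product split_def)
    also have "\<dots> = (\<Sum>x\<in>X0. c x * ?\<phi> x z)"
      using X0_sub that A0(1) B0(1)
      by (intro sum.mono_neutral_cong_right) (auto simp: C_def finite_PiE split: prod.split)
    finally show ?thesis using vanish that by simp
  qed
  then have "\<forall>a\<in>A0. \<forall>\<sigma>\<in>PiE {M+1..?T} (\<lambda>_. B0). C a \<sigma> = 0"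
    by (intro traj_mixture_coeffs_zero[OF c1 A0 B0 assms(6,7) Z]) auto
  then show "\<forall>x\<in>X0. c x = 0"
    using X0_sub by (force simp: C_def)
qed

text \<open>Indices \<open>a\<close> with the same density and indices \<open>b\<close> with the same kernel give the same
  trajectory density, so the family is re-indexed by representatives first.\<close>
lemma traj_family_lin_indep:
  fixes p :: "'a \<Rightarrow> (nat \<Rightarrow> 'x) \<Rightarrow> real"
  assumes c1: "\<forall>Y. pos_meas (Leb {1..M}) Y \<longrightarrow>
      lin_indep_fm ((\<lambda>a. restrict (p a) (PiE {1..M} (\<lambda>_. UNIV))) ` A) Y"
    and "1 \<le> k" "s \<le> M"
    and Z: "Z \<in> sets (lborelP {k*M+1..k*M+s})" "emeasure (lborelP {k*M+1..k*M+s}) Z > 0"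
  shows "lin_indep_fm
           ((\<lambda>(a, bs). restrict (traj M (k*M+s) (p a) (\<lambda>t. v (bs t))) (PiE {1..k*M+s} (\<lambda>_. UNIV)))
              ` (A \<times> {bs. \<forall>t\<in>{M+1..k*M+s}. bs t \<in> B}))
           {z \<in> PiE {1..k*M+s} (\<lambda>_. UNIV). restrict z {k*M+1..k*M+s} \<in> Z}"
proof -
  obtain A' where A': "A' \<subseteq> A" "inj_on (\<lambda>a. restrict (p a) (PiE {1..M} (\<lambda>_. UNIV))) A'"
    "(\<lambda>a. restrict (p a) (PiE {1..M} (\<lambda>_. UNIV))) ` A' = (\<lambda>a. restrict (p a) (PiE {1..M} (\<lambda>_. UNIV))) ` A"
    by (rule obtain_inj_on_representatives)
  obtain B' where B': "B' \<subseteq> B" "inj_on kernel B'" "kernel ` B' = kernel ` B"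
    by (rule obtain_inj_on_representatives)
  show ?thesis
    unfolding traj_family_representatives[OF A'(1,3) B'(1,3)]
    by (rule traj_family_lin_indep_inj[OF c1 A'(1,2) B'(1,2) assms(2,3) Z])
qed

end

lemma nat_block_decomposition:
  fixes M T :: nat
  assumes "0 < M" "M < T"
  obtains k where "1 \<le> k" "T = k * M + (if T mod M = 0 then M else T mod M)"
proof (cases "T mod M = 0")
  case True
  then have "T = (T div M - 1) * M + M" and "2 \<le> T div M"
    using assms div_mult_mod_eq[of T M] by (auto simp: algebra_simps)
  with True show ?thesis by (intro that[of "T div M - 1"]) auto
next
  case False
  have "1 \<le> T div M" using assms by (simp add: div_greater_zero_iff Suc_le_eq)
  with False show ?thesis by (intro that[of "T div M"]) simp_all
qed

theorem theorem4:
  fixes M T :: nat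
    and A :: "'a set" and p :: "'a \<Rightarrow> (nat \<Rightarrow> real ^ 'm) \<Rightarrow> real"
    and B :: "'b set" and v :: "'b \<Rightarrow> real ^ 'm \<Rightarrow> (nat \<Rightarrow> real ^ 'm) \<Rightarrow> real"
    and Zr :: "(nat \<Rightarrow> real ^ 'm) set"
  assumes M_pos: "0 < M"
    \<comment> \<open>p_a are densities on R^{mM}\<close>
    and dens_p: "\<forall>a\<in>A. p a \<in> borel_measurable (PiM {1..M} (\<lambda>_. lborel))
                     \<and> (\<integral>\<^sup>+ y. ennreal (p a y) \<partial>(PiM {1..M} (\<lambda>_. lborel))) = 1"
    \<comment> \<open>p_b are conditional densities\<close>
    and dens_v: "\<forall>b\<in>B. \<forall>y\<in>PiE {1..M} (\<lambda>_. UNIV).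
                     (\<lambda>z. v b z y) \<in> borel_measurable lborel
                     \<and> (\<integral>\<^sup>+ z. ennreal (v b z y) \<partial>lborel) = 1"
    \<comment> \<open>(c1)\<close>
    and c1_pos: "\<forall>a\<in>A. \<forall>y\<in>PiE {1..M} (\<lambda>_. UNIV). p a y > 0"
    and c1_indep: "\<forall>Y. pos_meas (Leb {1..M}) Y \<longrightarrow>
                     lin_indep_fm ((\<lambda>a. restrict (p a) (PiE {1..M} (\<lambda>_. UNIV))) ` A) Y"
    \<comment> \<open>(b1)\<close>
    and b1: "\<forall>b\<in>B. \<forall>z. \<forall>y\<in>PiE {1..M} (\<lambda>_. UNIV). v b z y > 0"
    \<comment> \<open>(b4)\<close>
    and b4: "\<exists>Y. full_meas (Leb {1..M}) Y \<and>
               (\<forall>Y' Z. Y' \<subseteq> Y \<longrightarrow> pos_meas (Leb {1..M}) Y' \<longrightarrow> pos_meas lebesgue Z \<longrightarrow>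
                  lin_indep_fm
                    ((\<lambda>b. restrict (\<lambda>(z, y). v b z y) (UNIV \<times> PiE {1..M} (\<lambda>_. UNIV))) ` B)
                    (Z \<times> Y'))"
    \<comment> \<open>(b5)\<close>
    and b5: "\<forall>l beta Z Y B0 c. 1 \<le> l \<longrightarrow> l \<le> M \<longrightarrow> beta \<in> PiE {1..l} (\<lambda>_. UNIV) \<longrightarrow>
               pos_meas lebesgue Z \<longrightarrow> pos_meas (Leb {l+1..M}) Y \<longrightarrow>
               finite B0 \<longrightarrow> B0 \<subseteq> B \<longrightarrow>
               (\<exists>b\<in>B0. c b \<noteq> (0::real)) \<longrightarrow>
               (\<forall>z\<in>Z. \<forall>y\<in>Y. (\<Sum>b\<in>B0. c b * v b z (merge_blk l beta y)) = 0) \<longrightarrow>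
               (\<exists>b\<in>B0. \<exists>b'\<in>B0. b \<noteq> b' \<and>
                  (\<forall>z. \<forall>y\<in>PiE {l+1..M} (\<lambda>_. UNIV).
                     v b z (merge_blk l beta y) = v b' z (merge_blk l beta y)))"
    \<comment> \<open>(b6)\<close>
    and b6: "\<forall>b\<in>B. \<forall>z. continuous_on (PiE {1..M} (\<lambda>_. UNIV)) (\<lambda>y. v b z y)"
    and T_gt: "M < T"
    and Zr: "pos_meas (Leb {T - (if T mod M = 0 then M else T mod M) + 1..T}) Zr"
  shows "lin_indep_fm
           ((\<lambda>(a, bs). restrict (traj M T (p a) (\<lambda>t. v (bs t))) (PiE {1..T} (\<lambda>_. UNIV)))
              ` (A \<times> {bs. \<forall>t\<in>{M+1..T}. bs t \<in> B}))
           {z \<in> PiE {1..T} (\<lambda>_. UNIV).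
              restrict z {T - (if T mod M = 0 then M else T mod M) + 1..T} \<in> Zr}"
proof -
  interpret lagged_kernels_indep M B v
    by unfold_locales (fact M_pos b5 b6 b4)+
  define r where "r = (if T mod M = 0 then M else T mod M)"
  obtain k where k: "1 \<le> k" "T = k * M + r"
    using nat_block_decomposition[OF M_pos T_gt] unfolding r_def .
  have "r \<le> M" using M_pos by (simp add: r_def)
  obtain Z where Z: "Z \<subseteq> Zr" "Z \<in> sets (lborelP {k*M+1..k*M+r})" "emeasure (lborelP {k*M+1..k*M+r}) Z > 0"
    using pos_meas_LebE[OF Zr[folded r_def]] unfolding k(2) by auto
  have "lin_indep_fm
          ((\<lambda>(a, bs). restrict (traj M T (p a) (\<lambda>t. v (bs t))) (PiE {1..T} (\<lambda>_. UNIV)))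
             ` (A \<times> {bs. \<forall>t\<in>{M+1..T}. bs t \<in> B}))
          {z \<in> PiE {1..T} (\<lambda>_. UNIV). restrict z {T - r + 1..T} \<in> Z}"
    using traj_family_lin_indep[OF c1_indep k(1) \<open>r \<le> M\<close> Z(2,3)] unfolding k(2) by simp
  then show ?thesis
    unfolding r_def[symmetric] by (rule lin_indep_fm_subset) (use Z(1) in auto)
qed

end
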